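(* Assume there exist $\varepsilon_{\mathbb S}>0$ and $d>0$ such that for every $\varepsilon\in(0,\varepsilon_{\mathbb S})$ and every $(x,s)\in\mathbb X\times\mathbb S$: $$\sum_{n\ge1}\mathbb P_{(x,0)}(|S_n-s|<\varepsilon)=\infty,$$ $$\liminf_{N\to\infty}\frac{\sum_{n,m=1}^N\mathbb P_{(x,0)}(|S_n-s|<\varepsilon,\ |S_{n+m}-s|<\varepsilon)}{\big(\sum_{n=1}^N\mathbb P_{(x,0)}(|S_n-s|<\varepsilon)\big)^2}\le d.$$ Then $\mathcal R_{(\mu,0)}=\mathbb S$ for every probability measure $\mu$ on $(\mathbb X,\mathcal X)$.
   Context: $(\mathbb X,\mathcal X)$ is a measurable space. A Markov random walk (MRW) on $\mathbb X\times\mathbb R^2$ is a Markov chain $(X_n,S_n)_{n\ge0}$ with values in $\mathbb X\times\mathbb R^2$ whose transition kernel $P$ satisfies $P((x,s);A\times S)=P((x,0);A\times(S-s))$ for all $(x,s)\in\mathbb X\times\mathbb R^2$, $A\in\mathcal X$ and Borel $S\subset\mathbb R^2$; then $(X_n)_n$ is itself a Markov chain (the driving chain), with transition kernel denoted $Q$. One always takes $S_0=0$. For a probability measure $\mu$ on $\mathbb X$, $\mathbb P_{(\mu,0)}$ (expectation $\mathbb E_{(\mu,0)}$) is the law of the chain with $X_0\sim\mu$, $S_0=0$; $\mathbb P_{(x,0)}:=\mathbb P_{(\delta_x,0)}$. Standing assumptions: $Q$ has an invariant probability measure $\pi$; $S_1$ is $\mathbb P_{(\pi,0)}$-integrable with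 $\mathbb E_{(\pi,0)}[S_1]=0$; there is a two-dimensional closed subgroup $\mathbb S$ of $\mathbb R^2$ with $\mathbb P_{(x,0)}(S_n\in\mathbb S)=1$ for all $x\in\mathbb X$, $n\ge0$. $|\cdot|$ is the Euclidean norm, $B(s,\varepsilon)$ the open Euclidean ball, $m_{\mathbb S}$ a Haar measure on $\mathbb S$ (viewed as a measure on $\mathbb R^2$). The recurrence set is $\mathcal R_{(\mu,0)}:=\{s\in\mathbb S:\ \forall\varepsilon>0,\ \mathbb P_{(\mu,0)}(|S_n-s|<\varepsilon\text{ for infinitely many }n)=1\}$, $\mathcal R_{(x,0)}:=\mathcal R_{(\delta_x,0)}$. *)

theory Defs
  imports "HOL-Probability.Probability"
begin

definition state_space :: "'x measure \<Rightarrow> ('x \<times> (real^2)) measure" where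
  "state_space Xs = Xs \<Otimes>\<^sub>M (borel :: (real^2) measure)"

definition path_space :: "'x measure \<Rightarrow> (nat \<Rightarrow> 'x \<times> (real^2)) measure" where
  "path_space Xs = (\<Pi>\<^sub>M i\<in>(UNIV::nat set). state_space Xs)"

definition is_chain_law ::
  "'x measure \<Rightarrow> ('x \<times> (real^2) \<Rightarrow> ('x \<times> (real^2)) measure) \<Rightarrow> ('x \<times> (real^2)) measure
     \<Rightarrow> (nat \<Rightarrow> 'x \<times> (real^2)) measure \<Rightarrow> bool" where
  "is_chain_law Xs K \<nu> P \<longleftrightarrow>
     prob_space P \<and> sets P = sets (path_space Xs) \<and>
     distr P (state_space Xs) (\<lambda>\<omega>. \<omega> 0) = \<nu> \<and>
     (\<forall>n A B. (\<forall>i. A i \<in> sets (state_space Xs)) \<longrightarrow> B \<in> sets (state_space Xs) \<longrightarrow>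
        measure P {\<omega>\<in>space P. (\<forall>i\<le>n. \<omega> i \<in> A i) \<and> \<omega> (Suc n) \<in> B}
        = (\<integral>\<omega>. indicator {\<omega>\<in>space P. \<forall>i\<le>n. \<omega> i \<in> A i} \<omega> * measure (K (\<omega> n)) B \<partial>P))"

definition chain_law ::
  "'x measure \<Rightarrow> ('x \<times> (real^2) \<Rightarrow> ('x \<times> (real^2)) measure) \<Rightarrow> ('x \<times> (real^2)) measure
     \<Rightarrow> (nat \<Rightarrow> 'x \<times> (real^2)) measure" where
  "chain_law Xs K \<nu> = (THE P. is_chain_law Xs K \<nu> P)"

definition P0 ::
  "'x measure \<Rightarrow> ('x \<times> (real^2) \<Rightarrow> ('x \<times> (real^2)) measure) \<Rightarrow> 'x measure
     \<Rightarrow> (nat \<Rightarrow> 'x \<times> (real^2)) measure" where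
  "P0 Xs K \<mu> = chain_law Xs K (\<mu> \<Otimes>\<^sub>M return (borel :: (real^2) measure) 0)"

definition S :: "nat \<Rightarrow> (nat \<Rightarrow> 'x \<times> (real^2)) \<Rightarrow> real^2" where
  "S n \<omega> = snd (\<omega> n)"

definition recurrence_set ::
  "'x measure \<Rightarrow> ('x \<times> (real^2) \<Rightarrow> ('x \<times> (real^2)) measure) \<Rightarrow> (real^2) set \<Rightarrow> 'x measure
     \<Rightarrow> (real^2) set" where
  "recurrence_set Xs K SS \<mu> =
     {s\<in>SS. \<forall>\<epsilon>>0. measure (P0 Xs K \<mu>)
        {\<omega>\<in>space (P0 Xs K \<mu>). \<exists>\<^sub>\<infinity>n. norm (S n \<omega> - s) < \<epsilon>} = 1}"

end

theory Submission
  imports Defs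
begin

(* The argument reduces recurrence of each s in SS to a uniform lower bound on the
   probability of returning infinitely often, combined with a zero-one argument.
   (1) Generic measure theory: approximation of measurable sets by a generating algebra,
       and a zero-one principle for sets that fill at most a fraction 1 - c of every set
       of that algebra.  Then the Kochen-Stone lemma, proved from the Chung-Erdos
       second-moment inequality.
   (2) Locale chain_kernel: since P0 is defined by a description, the chain is built
       explicitly with the Ionescu-Tulcea theorem (chain_from y, started at y); mixtures
       lam >>= chain_from are shown to be the unique chain laws, so that
       P_(mu,0) = (mu x delta_0) >>= chain_from, and the Markov property is derived.
   (3) Locale markov_random_walk: translation invariance of the kernel makes the chain
       spatially homogeneous.  Hence the escape probability from any state in X x SS is
       bounded by 1 - c, where c = 1/(8 + 16 d) is the Kochen-Stone bound obtained from
       the hypotheses (H1), (H2) at the starting points (x, 0); by the Markov property and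
       the zero-one principle, the shift-invariant escape event is then a null set.
   (4) Locale kochen_stone_walk collects the hypotheses on SS; the main theorem is an
       instance. *)

lemma measure_disjoint_tail_tendsto_zero:
  assumes fin: "finite_measure P" and A: "range A \<subseteq> sets P" and disj: "disjoint_family A"
  shows "(\<lambda>n. measure P (\<Union>i\<in>{n..}. A i)) \<longlonglongrightarrow> 0"
proof -
  interpret finite_measure P by fact
  have "(\<lambda>n. measure P (\<Union>i\<in>{n..}. A i)) \<longlonglongrightarrow> measure P (\<Inter>n. \<Union>i\<in>{n..}. A i)"
    using A by (intro finite_Lim_measure_decseq) (auto simp: decseq_def intro: order_trans)
  moreover have "(\<Inter>n. \<Union>i\<in>{n..}. A i) = {}"
  proof (rule ccontr)
    assume "(\<Inter>n. \<Union>i\<in>{n..}. A i) \<noteq> {}"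
    then obtain x where x: "\<And>n. x \<in> (\<Union>i\<in>{n..}. A i)" by blast
    from x[of 0] obtain i where i: "x \<in> A i" by auto
    from x[of "Suc i"] obtain j where j: "j \<ge> Suc i" "x \<in> A j" by auto
    have "A i \<inter> A j = {}" using disj j(1) unfolding disjoint_family_on_def by auto
    with i j show False by auto
  qed
  ultimately show ?thesis by simp
qed

(* Approximability in measure by sets of an algebra G survives countable disjoint unions:
   approximate a finite initial part of the union and neglect the tail. *)
lemma approx_disjoint_union:
  fixes A :: "nat \<Rightarrow> 'a set"
  assumes fin: "finite_measure P" and alg: "algebra (space P) G" and Gs: "G \<subseteq> sets P"
    and A: "range A \<subseteq> sets P" and disj: "disjoint_family A"
    and approx: "\<And>i \<delta>. 0 < \<delta> \<Longrightarrow> \<exists>B\<in>G. measure P ((A i - B) \<union> (B - A i)) < \<delta>"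
    and d: "0 < \<delta>"
  shows "\<exists>B\<in>G. measure P (((\<Union>i. A i) - B) \<union> (B - (\<Union>i. A i))) < \<delta>"
proof -
  interpret finite_measure P by fact
  interpret G: algebra "space P" G by fact
  have As: "A i \<in> sets P" for i using A by auto
  have "(\<lambda>n. measure P (\<Union>i\<in>{n..}. A i)) \<longlonglongrightarrow> 0"
    using A disj by (rule measure_disjoint_tail_tendsto_zero[OF fin])
  then obtain N where N: "measure P (\<Union>i\<in>{N..}. A i) < \<delta> / 2"
    using d by (auto dest!: order_tendstoD(2)[where a="\<delta> / 2"] simp: eventually_sequentially) blast
  have "\<forall>i. \<exists>B\<in>G. measure P ((A i - B) \<union> (B - A i)) < \<delta> / (2 * (Suc N))"
    using approx d by auto
  then obtain B where B: "\<And>i. B i \<in> G" "\<And>i. measure P ((A i - B i) \<union> (B i - A i)) < \<delta> / (2 * (Suc N))"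
    by metis
  have Bs: "B i \<in> sets P" for i using B(1) Gs by auto
  define BB where "BB = (\<Union>i<N. B i)"
  have sub: "((\<Union>i. A i) - BB) \<union> (BB - (\<Union>i. A i)) \<subseteq> (\<Union>i\<in>{N..}. A i) \<union> (\<Union>i<N. (A i - B i) \<union> (B i - A i))"
    unfolding BB_def by (auto simp: not_less) (metis atLeast_iff lessThan_iff not_le)
  have "measure P (((\<Union>i. A i) - BB) \<union> (BB - (\<Union>i. A i)))
      \<le> measure P ((\<Union>i\<in>{N..}. A i) \<union> (\<Union>i<N. (A i - B i) \<union> (B i - A i)))"
    using As Bs by (intro finite_measure_mono[OF sub]) auto
  also have "\<dots> \<le> measure P (\<Union>i\<in>{N..}. A i) + measure P (\<Union>i<N. (A i - B i) \<union> (B i - A i))"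
    using As Bs by (intro measure_Un_le) auto
  also have "measure P (\<Union>i<N. (A i - B i) \<union> (B i - A i)) \<le> (\<Sum>i<N. measure P ((A i - B i) \<union> (B i - A i)))"
    using As Bs by (intro finite_measure_subadditive_finite) auto
  also have "\<dots> \<le> (\<Sum>i<N. \<delta> / (2 * (Suc N)))" using B(2) by (intro sum_mono less_imp_le) auto
  also have "\<dots> = (\<delta> / 2) * (N / Suc N)" by (simp add: field_simps)
  also have "\<dots> < \<delta> / 2" using d by (simp add: field_simps)
  finally have "measure P (((\<Union>i. A i) - BB) \<union> (BB - (\<Union>i. A i))) < \<delta>" using N by simp
  moreover have "BB \<in> G" unfolding BB_def using B(1) by auto
  ultimately show ?thesis by blast
qed

lemma approx_by_generating_algebra:
  assumes fin: "finite_measure P" and sP: "sets P = sigma_sets (space P) G"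
    and alg: "algebra (space P) G" and X: "X \<in> sets P" and \<delta>: "0 < \<delta>"
  shows "\<exists>B\<in>G. measure P ((X - B) \<union> (B - X)) < \<delta>"
proof -
  interpret G: algebra "space P" G by fact
  have Gs: "G \<subseteq> sets P" using sP by auto
  have X': "X \<in> sigma_sets (space P) G" using X sP by simp
  have "\<forall>\<delta>>0. \<exists>B\<in>G. measure P ((X - B) \<union> (B - X)) < \<delta>"
    using G.Int_stable G.space_closed X'
  proof (induction rule: sigma_sets_induct_disjoint)
    case (basic A) then show ?case by (intro allI impI bexI[of _ A]) auto
  next
    case empty then show ?case by (intro allI impI bexI[of _ "{}"]) auto
  next
    case (compl A)
    show ?case
    proof (intro allI impI)
      fix \<delta> :: real assume "\<delta> > 0"
      with compl.IH obtain B where B: "B \<in> G" "measure P ((A - B) \<union> (B - A)) < \<delta>" by blast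
      have "((space P - A) - (space P - B)) \<union> ((space P - B) - (space P - A)) = (A - B) \<union> (B - A)"
        using G.space_closed B(1) sigma_sets_into_sp[OF G.space_closed compl.hyps] by auto
      then show "\<exists>B\<in>G. measure P ((space P - A - B) \<union> (B - (space P - A))) < \<delta>"
        using B by (intro bexI[of _ "space P - B"]) auto
    qed
  next
    case (union A)
    have "range A \<subseteq> sets P" using union.hyps(2) sP by auto
    then show ?case
      using union.hyps(1) union.IH by (intro allI impI approx_disjoint_union[OF fin alg Gs]) auto
  qed
  then show ?thesis using \<delta> by blast
qed

(* A zero-one principle: a measurable set Z that occupies at most a fraction 1 - c of
   every set of a generating algebra is a null set (approximate Z by such a set). *)
lemma null_if_uniformly_sparse_on_algebra:
  assumes fin: "finite_measure P" and sP: "sets P = sigma_sets (space P) G"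
    and alg: "algebra (space P) G" and Z: "Z \<in> sets P" and c: "0 < c" "c \<le> 1"
    and sparse: "\<And>B. B \<in> G \<Longrightarrow> measure P (B \<inter> Z) \<le> (1 - c) * measure P B"
  shows "measure P Z = 0"
proof -
  interpret finite_measure P by fact
  have Gs: "G \<subseteq> sets P" using sP by auto
  have "c * measure P Z \<le> 0 + e" if e: "0 < e" for e
  proof -
    define h where "h = e / 2"
    have h: "0 < h" "e = 2 * h" using e by (simp_all add: h_def)
    obtain B where B: "B \<in> G" and Bd: "measure P ((Z - B) \<union> (B - Z)) < h"
      using approx_by_generating_algebra[OF fin sP alg Z h(1)] by auto
    have Bs: "B \<in> sets P" using B Gs by auto
    have ZB: "measure P (Z - B) < h"
      using Bd Bs Z finite_measure_mono[of "Z - B" "(Z - B) \<union> (B - Z)"] by auto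
    have BZ: "measure P (B - Z) < h"
      using Bd Bs Z finite_measure_mono[of "B - Z" "(Z - B) \<union> (B - Z)"] by auto
    have "measure P Z = measure P ((B \<inter> Z) \<union> (Z - B))"
      by (rule arg_cong[where f="measure P"]) auto
    also have "\<dots> \<le> measure P (B \<inter> Z) + measure P (Z - B)"
      using Bs Z by (intro measure_Un_le) auto
    finally have Z_split: "measure P Z \<le> measure P (B \<inter> Z) + measure P (Z - B)" .
    have "measure P B \<le> measure P Z + measure P (B - Z)"
      using Bs Z by (intro order_trans[OF finite_measure_mono measure_Un_le]) auto
    then have "(1 - c) * measure P B \<le> (1 - c) * (measure P Z + h)"
      using BZ c by (intro mult_left_mono) auto
    then have "measure P Z \<le> (1 - c) * (measure P Z + h) + h"
      using Z_split sparse[OF B] ZB by linarith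
    moreover have "(1 - c) * (measure P Z + h) = measure P Z + h - c * measure P Z - c * h"
      by (simp add: algebra_simps)
    moreover have "0 \<le> c * h" using c h by simp
    ultimately show ?thesis using h by linarith
  qed
  then have "c * measure P Z \<le> 0" by (rule field_le_epsilon)
  then have "measure P Z \<le> 0" using c by (simp add: mult_le_0_iff)
  then show ?thesis using measure_nonneg[of P Z] by linarith
qed

lemma nonneg_quadratic_discriminant:
  fixes E2 e p :: real
  assumes nonneg: "\<And>l. 0 \<le> E2 - 2 * l * e + l^2 * p" and p: "0 \<le> p"
  shows "e^2 \<le> p * E2"
proof (cases "p = 0")
  case True
  have "e = 0"
  proof (rule ccontr)
    assume "e \<noteq> 0"
    have "0 \<le> E2 - 2 * ((E2 + 1) / (2 * e)) * e" using nonneg[of "(E2 + 1) / (2 * e)"] True by simp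
    also have "\<dots> = -1" using \<open>e \<noteq> 0\<close> by (simp add: field_simps)
    finally show False by simp
  qed
  then show ?thesis using True by simp
next
  case False
  then have p: "p > 0" using p by simp
  have "0 \<le> E2 - 2 * (e / p) * e + (e / p)^2 * p" by (rule nonneg)
  also have "\<dots> = E2 - e^2 / p" using p by (simp add: field_simps power2_eq_square)
  finally have "e^2 / p \<le> E2" by simp
  then show ?thesis using p by (simp add: field_simps)
qed

(* It is Cauchy-Schwarz for the counting variable Z = sum_i 1_{A_i} and 1_U, expressed
   through the nonnegativity of E[(Z - l 1_U)^2] for every real l. *)
lemma (in prob_space) chung_erdos_inequality:
  assumes A: "\<And>i. A i \<in> events" and I: "finite I"
  shows "(\<Sum>i\<in>I. prob (A i))^2 \<le> prob (\<Union>i\<in>I. A i) * (\<Sum>i\<in>I. \<Sum>j\<in>I. prob (A i \<inter> A j))"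
proof -
  define Z where "Z \<omega> = (\<Sum>i\<in>I. indicator (A i) \<omega> :: real)" for \<omega>
  define U where "U = (\<Union>i\<in>I. A i)"
  have U: "U \<in> events" unfolding U_def using A I by auto
  have intI: "integrable M (indicator B :: _ \<Rightarrow> real)" if "B \<in> events" for B
    using that by (intro integrable_real_indicator) (simp_all add: emeasure_eq_measure)
  have intZ: "integrable M Z" unfolding Z_def by (auto intro!: intI A)
  have Z2: "(Z \<omega>)^2 = (\<Sum>i\<in>I. \<Sum>j\<in>I. indicator (A i \<inter> A j) \<omega>)" for \<omega>
    unfolding Z_def power2_eq_square sum_product by (simp add: indicator_inter_arith)
  have intZ2: "integrable M (\<lambda>\<omega>. (Z \<omega>)^2)"
  proof -
    have "integrable M (indicator (A i \<inter> A j) :: _ \<Rightarrow> real)" for i j using A by (intro intI) auto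
    then show ?thesis unfolding Z2 by simp
  qed
  have EZ: "(\<integral>\<omega>. Z \<omega> \<partial>M) = (\<Sum>i\<in>I. prob (A i))"
    unfolding Z_def using A by (subst Bochner_Integration.integral_sum) (auto intro: intI)
  have EZ2: "(\<integral>\<omega>. (Z \<omega>)^2 \<partial>M) = (\<Sum>i\<in>I. \<Sum>j\<in>I. prob (A i \<inter> A j))"
    unfolding Z2 using A
    by (subst Bochner_Integration.integral_sum, force intro: intI)+ (auto simp: Int_absorb2 sets.sets_into_space)
  have ZU: "Z \<omega> * indicator U \<omega> = Z \<omega>" for \<omega>
    unfolding Z_def U_def by (auto simp: indicator_def intro!: sum.neutral)
  have square_expansion: "(Z \<omega> - l * indicator U \<omega>)^2 = (Z \<omega>)^2 - 2 * l * Z \<omega> + l^2 * indicator U \<omega>" for \<omega> l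
  proof -
    have "(Z \<omega> - l * indicator U \<omega>)^2 = (Z \<omega>)^2 - 2 * l * (Z \<omega> * indicator U \<omega>) + l^2 * (indicator U \<omega>)^2"
      by (simp add: power2_eq_square algebra_simps)
    also have "(indicator U \<omega> :: real)^2 = indicator U \<omega>" by (simp add: indicator_def)
    finally show ?thesis by (simp add: ZU)
  qed
  have "0 \<le> (\<integral>\<omega>. (Z \<omega>)^2 \<partial>M) - 2 * l * (\<integral>\<omega>. Z \<omega> \<partial>M) + l^2 * prob U" for l
  proof -
    have "0 \<le> (\<integral>\<omega>. (Z \<omega> - l * indicator U \<omega>)^2 \<partial>M)" by (rule integral_nonneg_AE) auto
    also have "\<dots> = (\<integral>\<omega>. (Z \<omega>)^2 - 2 * l * Z \<omega> + l^2 * indicator U \<omega> \<partial>M)"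
      by (simp add: square_expansion)
    also have "\<dots> = (\<integral>\<omega>. (Z \<omega>)^2 \<partial>M) - 2 * l * (\<integral>\<omega>. Z \<omega> \<partial>M) + l^2 * prob U"
      using intZ intZ2 intI[OF U] Int_absorb2[OF sets.sets_into_space[OF U]]
      by (simp add: Bochner_Integration.integral_add Bochner_Integration.integral_diff Bochner_Integration.integrable_diff)
    finally show ?thesis .
  qed
  then have "(\<integral>\<omega>. Z \<omega> \<partial>M)^2 \<le> prob U * (\<integral>\<omega>. (Z \<omega>)^2 \<partial>M)"
    by (rule nonneg_quadratic_discriminant) simp
  then show ?thesis unfolding EZ EZ2 U_def .
qed

lemma double_sum_le_twice_upper_triangle:
  fixes f :: "nat \<Rightarrow> nat \<Rightarrow> real"
  assumes "finite I" and nn: "\<And>i j. 0 \<le> f i j" and sym: "\<And>i j. f i j = f j i"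
  shows "(\<Sum>i\<in>I. \<Sum>j\<in>I. f i j) \<le> 2 * (\<Sum>i\<in>I. \<Sum>j\<in>I. if i \<le> j then f i j else 0)"
proof -
  have "(\<Sum>i\<in>I. \<Sum>j\<in>I. f i j) \<le> (\<Sum>i\<in>I. \<Sum>j\<in>I. (if i \<le> j then f i j else 0) + (if j \<le> i then f i j else 0))"
    by (intro sum_mono) (auto simp: nn)
  also have "\<dots> = (\<Sum>i\<in>I. \<Sum>j\<in>I. if i \<le> j then f i j else 0) + (\<Sum>i\<in>I. \<Sum>j\<in>I. if j \<le> i then f i j else 0)"
    by (simp add: sum.distrib)
  also have "(\<Sum>i\<in>I. \<Sum>j\<in>I. if j \<le> i then f i j else 0) = (\<Sum>j\<in>I. \<Sum>i\<in>I. if j \<le> i then f i j else 0)"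
    by (rule sum.swap)
  also have "\<dots> = (\<Sum>i\<in>I. \<Sum>j\<in>I. if i \<le> j then f i j else 0)"
    by (intro sum.cong refl) (metis sym)
  finally show ?thesis by simp
qed

lemma upper_row_le_gap_sum:
  fixes f :: "nat \<Rightarrow> nat \<Rightarrow> real"
  assumes nn: "\<And>i j. 0 \<le> f i j" and i: "i \<le> N"
  shows "(\<Sum>j\<in>{m..N}. if i \<le> j then f i j else 0) \<le> f i i + (\<Sum>k\<in>{1..N}. f i (i + k))"
proof -
  have "(\<Sum>j\<in>{m..N}. if i \<le> j then f i j else 0) = (\<Sum>j\<in>{j\<in>{m..N}. i \<le> j}. f i j)"
    by (rule sum.inter_filter[symmetric]) simp
  also have "\<dots> \<le> (\<Sum>j\<in>{i..N}. f i j)" by (rule sum_mono2) (auto simp: nn)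
  also have "\<dots> = (\<Sum>k\<in>{0..N - i}. f i (k + i))"
    using sum.shift_bounds_cl_nat_ivl[of "f i" 0 i "N - i"] i by simp
  also have "\<dots> \<le> (\<Sum>k\<in>{0..N}. f i (k + i))" by (rule sum_mono2) (auto simp: nn)
  also have "\<dots> = f i i + (\<Sum>k\<in>{1..N}. f i (i + k))"
    by (simp add: sum.atLeast_Suc_atMost add.commute)
  finally show ?thesis .
qed

(* The Chung-Erdos bound for a block {m..N} of events, with the second moment
   controlled by the quantities S_N = sum_n P(A_n) and
   D_N = sum_{n,k <= N} P(A_n n A_{n+k}) appearing in the Kochen-Stone condition. *)
lemma (in prob_space) block_second_moment_bound:
  fixes A :: "nat \<Rightarrow> 'a set"
  assumes A: "\<And>n. A n \<in> events" and m: "1 \<le> m"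
  shows "(\<Sum>i\<in>{m..N}. prob (A i))^2 \<le> prob (\<Union>i\<in>{m..N}. A i)
           * (2 * ((\<Sum>n\<in>{1..N}. prob (A n)) + (\<Sum>n\<in>{1..N}. \<Sum>k\<in>{1..N}. prob (A n \<inter> A (n + k)))))"
proof -
  define f where "f i j = prob (A i \<inter> A j)" for i j
  have fnn: "0 \<le> f i j" for i j by (simp add: f_def)
  have "(\<Sum>i\<in>{m..N}. \<Sum>j\<in>{m..N}. f i j) \<le> 2 * (\<Sum>i\<in>{m..N}. \<Sum>j\<in>{m..N}. if i \<le> j then f i j else 0)"
    by (rule double_sum_le_twice_upper_triangle) (auto simp: fnn f_def Int_commute)
  also have "(\<Sum>i\<in>{m..N}. \<Sum>j\<in>{m..N}. if i \<le> j then f i j else 0) \<le> (\<Sum>i\<in>{m..N}. f i i + (\<Sum>k\<in>{1..N}. f i (i + k)))"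
    by (intro sum_mono upper_row_le_gap_sum fnn) auto
  also have "\<dots> \<le> (\<Sum>i\<in>{1..N}. f i i + (\<Sum>k\<in>{1..N}. f i (i + k)))"
    using m by (intro sum_mono2) (auto intro!: add_nonneg_nonneg sum_nonneg fnn)
  also have "\<dots> = (\<Sum>n\<in>{1..N}. prob (A n)) + (\<Sum>n\<in>{1..N}. \<Sum>k\<in>{1..N}. prob (A n \<inter> A (n + k)))"
    unfolding f_def by (simp add: sum.distrib)
  finally have E2: "(\<Sum>i\<in>{m..N}. \<Sum>j\<in>{m..N}. f i j)
      \<le> 2 * ((\<Sum>n\<in>{1..N}. prob (A n)) + (\<Sum>n\<in>{1..N}. \<Sum>k\<in>{1..N}. prob (A n \<inter> A (n + k))))"
    by simp
  have "(\<Sum>i\<in>{m..N}. prob (A i))^2 \<le> prob (\<Union>i\<in>{m..N}. A i) * (\<Sum>i\<in>{m..N}. \<Sum>j\<in>{m..N}. f i j)"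
    unfolding f_def by (rule chung_erdos_inequality[of A, OF A]) simp
  also have "\<dots> \<le> prob (\<Union>i\<in>{m..N}. A i)
      * (2 * ((\<Sum>n\<in>{1..N}. prob (A n)) + (\<Sum>n\<in>{1..N}. \<Sum>k\<in>{1..N}. prob (A n \<inter> A (n + k)))))"
    by (intro mult_left_mono E2) simp
  finally show ?thesis .
qed

lemma kochen_stone_arith:
  fixes S D e pU d :: real
  assumes S: "S \<ge> 1" and e: "e \<ge> S / 2" and CE: "e^2 \<le> pU * (2 * (S + D))"
    and D: "D \<le> 2 * d * S^2" and pU: "pU \<ge> 0" and d: "d > 0"
  shows "1 / (8 + 16 * d) \<le> pU"
proof -
  have "S^2 / 4 \<le> e^2"
  proof -
    have "(S / 2)^2 \<le> e^2" using S e by (intro power_mono) auto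
    then show ?thesis by (simp add: power2_eq_square)
  qed
  also have "\<dots> \<le> pU * (2 * (S + D))" by fact
  also have "\<dots> \<le> pU * (2 * (S^2 + 2 * d * S^2))"
  proof -
    have "S \<le> S^2" using S by (simp add: power2_eq_square)
    then show ?thesis using D pU by (intro mult_left_mono) auto
  qed
  finally have "S^2 * (1 / 4) \<le> S^2 * (pU * (2 + 4 * d))" by (simp add: algebra_simps)
  moreover have "0 < S^2" using S by simp
  ultimately have "1 / 4 \<le> pU * (2 + 4 * d)" by (rule mult_left_le_imp_le)
  then show ?thesis using d by (simp add: field_simps)
qed

(* Kochen-Stone, uniform tail version: every tail union U_{i>=m} A_i has probability at
   least 1 / (8 + 16 d).  Choose N large, with S_N >= 2 sum_{n<m} P(A_n) and the
   ratio D_N / S_N^2 below 2 d. *)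
lemma (in prob_space) kochen_stone_tail:
  fixes A :: "nat \<Rightarrow> 'a set" and d :: real
  assumes A: "\<And>n. A n \<in> events" and d: "0 < d" and m: "1 \<le> m"
    and unbounded: "\<And>B. \<exists>N. B \<le> (\<Sum>n\<in>{1..N}. prob (A n))"
    and ratio: "liminf (\<lambda>N. ereal ((\<Sum>n\<in>{1..N}. \<Sum>k\<in>{1..N}. prob (A n \<inter> A (n + k)))
                    / (\<Sum>n\<in>{1..N}. prob (A n))^2)) \<le> ereal d"
  shows "1 / (8 + 16 * d) \<le> prob (\<Union>i\<in>{m..}. A i)"
proof -
  define S where "S N = (\<Sum>n\<in>{1..N}. prob (A n))" for N
  define D where "D N = (\<Sum>n\<in>{1..N}. \<Sum>k\<in>{1..N}. prob (A n \<inter> A (n + k)))" for N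
  define a where "a = (\<Sum>n\<in>{1..<m}. prob (A n))"
  obtain N0 where N0: "max 1 (2 * a) \<le> S N0" using unbounded unfolding S_def by blast
  have "liminf (\<lambda>N. ereal (D N / (S N)^2)) < ereal (2 * d)"
    using ratio d unfolding S_def D_def by (simp add: le_less_trans)
  from liminf_upper_bound[OF this, of "max N0 m"]
  obtain N where N: "N > max N0 m" and rat: "ereal (D N / (S N)^2) < ereal (2 * d)" by auto
  have "S N0 \<le> S N"
    using N unfolding S_def by (intro sum_mono2) auto
  then have SN: "max 1 (2 * a) \<le> S N"
    using N0 by linarith
  have DN: "D N \<le> 2 * d * (S N)^2"
  proof -
    have "D N / (S N)^2 < 2 * d" using rat by simp
    moreover have "0 < (S N)^2" using SN by simp
    ultimately show ?thesis by (simp add: field_simps)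
  qed
  have block: "(\<Sum>i\<in>{m..N}. prob (A i)) = S N - a"
  proof -
    have "{1..N} = {1..<m} \<union> {m..N}" using m N by auto
    then show ?thesis unfolding S_def a_def by (simp add: sum.union_disjoint ivl_disj_int)
  qed
  have CE: "(S N - a)^2 \<le> prob (\<Union>i\<in>{m..N}. A i) * (2 * (S N + D N))"
    using block_second_moment_bound[of A m N, OF A m] by (simp only: block S_def[symmetric] D_def[symmetric])
  have "1 / (8 + 16 * d) \<le> prob (\<Union>i\<in>{m..N}. A i)"
    by (rule kochen_stone_arith[OF _ _ CE DN _ d]) (use SN in auto)
  also have "\<dots> \<le> prob (\<Union>i\<in>{m..}. A i)"
    using A by (intro finite_measure_mono) auto
  finally show ?thesis .
qed

lemma (in prob_space) kochen_stone:
  fixes A :: "nat \<Rightarrow> 'a set" and d :: real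
  assumes A: "\<And>n. A n \<in> events" and d: "0 < d"
    and unbounded: "\<And>B. \<exists>N. B \<le> (\<Sum>n\<in>{1..N}. prob (A n))"
    and ratio: "liminf (\<lambda>N. ereal ((\<Sum>n\<in>{1..N}. \<Sum>k\<in>{1..N}. prob (A n \<inter> A (n + k)))
                    / (\<Sum>n\<in>{1..N}. prob (A n))^2)) \<le> ereal d"
  shows "1 / (8 + 16 * d) \<le> prob (\<Inter>m. \<Union>i\<in>{m..}. A i)"
proof -
  have "(\<lambda>m. prob (\<Union>i\<in>{m..}. A i)) \<longlonglongrightarrow> prob (\<Inter>m. \<Union>i\<in>{m..}. A i)"
    using A by (intro finite_Lim_measure_decseq) (auto simp: decseq_def intro: order_trans)
  then show ?thesis
    by (rule LIMSEQ_le_const) (use kochen_stone_tail[of A, OF A d _ unbounded ratio] in auto)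
qed

lemma INFM_shift: "(\<exists>\<^sub>\<infinity>i. P (n + i)) \<longleftrightarrow> (\<exists>\<^sub>\<infinity>i::nat. P i)"
proof
  assume "\<exists>\<^sub>\<infinity>i. P (n + i)"
  then show "\<exists>\<^sub>\<infinity>i. P i" unfolding INFM_nat_le by (metis le_add2 le_trans)
next
  assume h: "\<exists>\<^sub>\<infinity>i. P i"
  show "\<exists>\<^sub>\<infinity>i. P (n + i)"
    unfolding INFM_nat_le
  proof
    fix m
    obtain k where "k \<ge> n + m" "P k" using h unfolding INFM_nat_le by blast
    then show "\<exists>i\<ge>m. P (n + i)" by (intro exI[of _ "k - n"]) auto
  qed
qed

lemma (in prob_space) partial_sums_unbounded:
  assumes A: "\<And>n. A n \<in> events" and diverge: "(\<Sum>n. emeasure M (A (Suc n))) = \<infinity>"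
  shows "\<exists>N. B \<le> (\<Sum>n\<in>{1..N}. prob (A n))"
proof (rule ccontr)
  assume "\<not> (\<exists>N. B \<le> (\<Sum>n\<in>{1..N}. prob (A n)))"
  then have lt: "(\<Sum>n\<in>{1..N}. prob (A n)) < B" for N by (simp add: not_le)
  have "(\<Sum>n. emeasure M (A (Suc n))) \<le> ennreal B"
  proof (rule suminf_le_const)
    show "summable (\<lambda>n. emeasure M (A (Suc n)))" by (rule summableI)
    fix N
    have "(\<Sum>i<N. emeasure M (A (Suc i))) = ennreal (\<Sum>i<N. prob (A (Suc i)))"
      by (simp add: emeasure_eq_measure sum_ennreal)
    also have "(\<Sum>i<N. prob (A (Suc i))) = (\<Sum>n\<in>{1..N}. prob (A n))"
      by (simp add: sum.atLeast1_atMost_eq)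
    finally show "(\<Sum>i<N. emeasure M (A (Suc i))) \<le> ennreal B"
      using lt[of N] by (simp add: ennreal_leI less_imp_le)
  qed
  then show False using diverge by (simp add: top_unique)
qed

definition pshift :: "nat \<Rightarrow> (nat \<Rightarrow> 'a) \<Rightarrow> (nat \<Rightarrow> 'a)" where
  "pshift n \<omega> = (\<lambda>i. \<omega> (n + i))"

(* A measurable probability kernel on the state space X x R^2 of a Markov random walk.
   The state space is assumed nonempty so that mixtures of path measures make sense. *)
locale chain_kernel =
  fixes Xs :: "'x measure" and K :: "'x \<times> (real^2) \<Rightarrow> ('x \<times> (real^2)) measure"
  assumes K_kernel: "K \<in> state_space Xs \<rightarrow>\<^sub>M prob_algebra (state_space Xs)"
    and nonempty: "space Xs \<noteq> {}"
begin

abbreviation "M \<equiv> state_space Xs"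
abbreviation "PS \<equiv> Pi\<^sub>M (UNIV::nat set) (\<lambda>_. M)"

lemma path_space_eq: "path_space Xs = PS"
  by (simp add: path_space_def)

lemma space_M: "space M = space Xs \<times> UNIV"
  by (simp add: state_space_def space_pair_measure)

lemma space_M_nonempty: "space M \<noteq> {}"
  using nonempty by (simp add: space_M)

lemma K_sub[measurable]: "K \<in> M \<rightarrow>\<^sub>M subprob_algebra M"
  using K_kernel by (rule measurable_prob_algebraD)

lemma K_prob: "y \<in> space M \<Longrightarrow> prob_space (K y)"
  using measurable_space[OF K_kernel] by (auto simp: space_prob_algebra)

lemma K_sets: "y \<in> space M \<Longrightarrow> sets (K y) = sets M"
  using measurable_space[OF K_kernel] by (auto simp: space_prob_algebra)

definition rect_transitions :: "(nat \<Rightarrow> 'x \<times> (real^2)) measure \<Rightarrow> bool" where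
  "rect_transitions P \<longleftrightarrow> (\<forall>n A B. (\<forall>i. A i \<in> sets M) \<longrightarrow> B \<in> sets M \<longrightarrow>
     emeasure P {\<omega>\<in>space PS. (\<forall>i\<le>n. \<omega> i \<in> A i) \<and> \<omega> (Suc n) \<in> B}
     = (\<integral>\<^sup>+\<omega>. indicator {\<omega>\<in>space PS. \<forall>i\<le>n. \<omega> i \<in> A i} \<omega> * emeasure (K (\<omega> n)) B \<partial>P))"

definition fdd :: "nat \<Rightarrow> (nat \<Rightarrow> 'x \<times> (real^2)) measure \<Rightarrow> (nat \<Rightarrow> 'x \<times> (real^2)) measure" where
  "fdd n P = distr P (Pi\<^sub>M {0..<n} (\<lambda>_. M)) (\<lambda>\<omega>. restrict \<omega> {0..<n})"

lemma fdd_rect: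
  assumes sP: "sets P = sets PS" and A: "\<And>i. i < n \<Longrightarrow> A i \<in> sets M"
  shows "emeasure (fdd n P) (Pi\<^sub>E {0..<n} A) = emeasure P {\<omega>\<in>space PS. \<forall>i<n. \<omega> i \<in> A i}"
proof -
  have "Pi\<^sub>E {0..<n} A \<in> sets (Pi\<^sub>M {0..<n} (\<lambda>_. M))"
    using A by (intro sets_PiM_I_finite) auto
  then have "emeasure (fdd n P) (Pi\<^sub>E {0..<n} A) = emeasure P ((\<lambda>\<omega>. restrict \<omega> {0..<n}) -` Pi\<^sub>E {0..<n} A \<inter> space P)"
    unfolding fdd_def by (subst emeasure_distr) (auto simp: measurable_cong_sets[OF sP refl] intro!: measurable_restrict_subset)
  also have "(\<lambda>\<omega>. restrict \<omega> {0..<n}) -` Pi\<^sub>E {0..<n} A \<inter> space P = {\<omega>\<in>space PS. \<forall>i<n. \<omega> i \<in> A i}"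
    using sets_eq_imp_space_eq[OF sP] by (auto simp: PiE_iff)
  finally show ?thesis .
qed

lemma fdd_eqI:
  assumes fP: "finite_measure P" and sP: "sets P = sets PS" and sP': "sets P' = sets PS"
    and rect: "\<And>A. (\<And>i. i < n \<Longrightarrow> A i \<in> sets M) \<Longrightarrow>
                 emeasure (fdd n P) (Pi\<^sub>E {0..<n} A) = emeasure (fdd n P') (Pi\<^sub>E {0..<n} A)"
  shows "fdd n P = fdd n P'"
proof (rule measure_eqI_PiM_finite[where A="\<lambda>_. space (Pi\<^sub>M {0..<n} (\<lambda>_. M))"])
  show "sets (fdd n P) = sets (Pi\<^sub>M {0..<n} (\<lambda>_. M))" "sets (fdd n P') = sets (Pi\<^sub>M {0..<n} (\<lambda>_. M))"
    by (simp_all add: fdd_def)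
  show "range (\<lambda>_. space (Pi\<^sub>M {0..<n} (\<lambda>_. M))) \<subseteq> prod_algebra {0..<n} (\<lambda>_. M)"
    using prod_algebraI_finite[of "{0..<n}" "\<lambda>_. space M" "\<lambda>_. M"] by (auto simp: space_PiM)
  interpret finite_measure P by fact
  show "emeasure (fdd n P) (space (Pi\<^sub>M {0..<n} (\<lambda>_. M))) \<noteq> \<infinity>" for i :: nat
    unfolding fdd_def by (subst emeasure_distr) (auto simp: measurable_cong_sets[OF sP refl] intro!: measurable_restrict_subset)
qed (use rect in auto)

lemma fdd_one:
  assumes sP: "sets P = sets PS" and A: "A \<in> sets M"
  shows "emeasure (fdd (Suc 0) P) (Pi\<^sub>E {0..<Suc 0} (\<lambda>_. A)) = emeasure (distr P M (\<lambda>\<omega>. \<omega> 0)) A"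
  using A sets_eq_imp_space_eq[OF sP]
  by (subst fdd_rect[OF sP]) (auto simp: emeasure_distr measurable_cong_sets[OF sP refl] intro!: arg_cong2[where f=emeasure])

lemma fdd_step:
  assumes sQ: "sets Q = sets PS" and RQ: "rect_transitions Q"
    and A: "\<And>i. i < Suc (Suc n) \<Longrightarrow> A i \<in> sets M"
  shows "emeasure (fdd (Suc (Suc n)) Q) (Pi\<^sub>E {0..<Suc (Suc n)} A)
       = (\<integral>\<^sup>+x. indicator (Pi\<^sub>E {0..<Suc n} A) x * emeasure (K (x n)) (A (Suc n)) \<partial>fdd (Suc n) Q)"
proof -
  define A' where "A' i = (if i \<le> n then A i else space M)" for i
  have A'[measurable]: "A' i \<in> sets M" for i using A by (auto simp: A'_def)
  have AS[measurable]: "A (Suc n) \<in> sets M" using A by auto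
  have "Pi\<^sub>E {0..<Suc n} A \<in> sets (Pi\<^sub>M {0..<Suc n} (\<lambda>_. M))"
    using A by (intro sets_PiM_I_finite) auto
  note [measurable] = this
  have "emeasure (fdd (Suc (Suc n)) Q) (Pi\<^sub>E {0..<Suc (Suc n)} A) = emeasure Q {\<omega>\<in>space PS. \<forall>i<Suc (Suc n). \<omega> i \<in> A i}"
    using A by (subst fdd_rect[OF sQ]) auto
  also have "{\<omega>\<in>space PS. \<forall>i<Suc (Suc n). \<omega> i \<in> A i} = {\<omega>\<in>space PS. (\<forall>i\<le>n. \<omega> i \<in> A' i) \<and> \<omega> (Suc n) \<in> A (Suc n)}"
    by (auto simp: A'_def less_Suc_eq_le le_Suc_eq)
  also have "emeasure Q \<dots> = (\<integral>\<^sup>+\<omega>. indicator {\<omega>\<in>space PS. \<forall>i\<le>n. \<omega> i \<in> A' i} \<omega> * emeasure (K (\<omega> n)) (A (Suc n)) \<partial>Q)"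
    using RQ A' AS unfolding rect_transitions_def by blast
  also have "\<dots> = (\<integral>\<^sup>+\<omega>. indicator (Pi\<^sub>E {0..<Suc n} A) (restrict \<omega> {0..<Suc n}) * emeasure (K (restrict \<omega> {0..<Suc n} n)) (A (Suc n)) \<partial>Q)"
    using sets_eq_imp_space_eq[OF sQ]
    by (intro nn_integral_cong) (auto simp: indicator_def PiE_iff space_PiM less_Suc_eq_le A'_def)
  also have "\<dots> = (\<integral>\<^sup>+x. indicator (Pi\<^sub>E {0..<Suc n} A) x * emeasure (K (x n)) (A (Suc n)) \<partial>fdd (Suc n) Q)"
    unfolding fdd_def by (subst nn_integral_distr) (auto simp: measurable_cong_sets[OF sQ refl] intro!: measurable_restrict_subset)
  finally show ?thesis .
qed

lemma fdd_unique:
  assumes fP: "finite_measure P" and sP: "sets P = sets PS" and sP': "sets P' = sets PS"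
    and init: "distr P M (\<lambda>\<omega>. \<omega> 0) = distr P' M (\<lambda>\<omega>. \<omega> 0)"
    and R: "rect_transitions P" and R': "rect_transitions P'"
  shows "fdd (Suc n) P = fdd (Suc n) P'"
proof (induction n)
  case 0
  show ?case
  proof (rule fdd_eqI[OF fP sP sP'])
    fix A assume "\<And>i. i < Suc 0 \<Longrightarrow> A i \<in> sets M"
    then have A0: "A 0 \<in> sets M" by simp
    have "Pi\<^sub>E {0..<Suc 0} A = Pi\<^sub>E {0..<Suc 0} (\<lambda>_. A 0)" by (auto simp: PiE_iff)
    then show "emeasure (fdd (Suc 0) P) (Pi\<^sub>E {0..<Suc 0} A) = emeasure (fdd (Suc 0) P') (Pi\<^sub>E {0..<Suc 0} A)"
      by (simp only: fdd_one[OF sP A0] fdd_one[OF sP' A0] init)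
  qed
next
  case (Suc n)
  show ?case
    by (rule fdd_eqI[OF fP sP sP']) (simp add: fdd_step[OF sP R] fdd_step[OF sP' R'] Suc)
qed

lemma chain_unique:
  assumes fP: "finite_measure P" and sP: "sets P = sets PS" and sP': "sets P' = sets PS"
    and init: "distr P M (\<lambda>\<omega>. \<omega> 0) = distr P' M (\<lambda>\<omega>. \<omega> 0)"
    and R: "rect_transitions P" and R': "rect_transitions P'"
  shows "P = P'"
proof (rule measure_eqI_PiM_infinite[OF sP sP' _ fP])
  fix J :: "nat set" and A assume J: "finite J" and A: "\<And>i. i \<in> J \<Longrightarrow> A i \<in> sets M"
  obtain k where "J \<subseteq> {..<k}" using finite_nat_bounded[OF J] by auto
  then have n: "J \<subseteq> {0..<Suc k}" by auto
  have X: "prod_emb {0..<Suc k} (\<lambda>_. M) J (Pi\<^sub>E J A) \<in> sets (Pi\<^sub>M {0..<Suc k} (\<lambda>_. M))"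
    using n A J by (intro sets_PiM_I) (auto intro!: sets_PiM_I_finite)
  have eq: "prod_emb UNIV (\<lambda>_. M) J (Pi\<^sub>E J A) = prod_emb UNIV (\<lambda>_. M) {0..<Suc k} (prod_emb {0..<Suc k} (\<lambda>_. M) J (Pi\<^sub>E J A))"
    using n by simp
  have "emeasure Q (prod_emb UNIV (\<lambda>_. M) J (Pi\<^sub>E J A)) = emeasure (fdd (Suc k) Q) (prod_emb {0..<Suc k} (\<lambda>_. M) J (Pi\<^sub>E J A))"
    if sQ: "sets Q = sets PS" for Q
    unfolding fdd_def eq by (rule emeasure_distr_restrict[symmetric, OF _ sQ X]) simp
  then show "emeasure P (prod_emb UNIV (\<lambda>_. M) J (Pi\<^sub>E J A)) = emeasure P' (prod_emb UNIV (\<lambda>_. M) J (Pi\<^sub>E J A))"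
    using fdd_unique[OF fP sP sP' init R R'] sP sP' by metis
qed

definition it_kernels :: "'x \<times> (real^2) \<Rightarrow> nat \<Rightarrow> (nat \<Rightarrow> 'x \<times> (real^2)) \<Rightarrow> ('x \<times> (real^2)) measure" where
  "it_kernels y i x = (case i of 0 \<Rightarrow> return M y | Suc n \<Rightarrow> K (x n))"

lemma it_kernels_meas:
  assumes y: "y \<in> space M"
  shows "it_kernels y i \<in> Pi\<^sub>M {0..<i} (\<lambda>_. M) \<rightarrow>\<^sub>M subprob_algebra M"
proof (cases i)
  case 0
  have "return M y \<in> space (subprob_algebra M)"
    using y by (auto simp: space_subprob_algebra intro!: prob_space_imp_subprob_space prob_space_return)
  moreover have "it_kernels y i = (\<lambda>x. return M y)" using 0 by (auto simp: it_kernels_def fun_eq_iff)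
  ultimately show ?thesis using measurable_const by simp
next
  case (Suc n)
  have "(\<lambda>x. K (x n)) \<in> Pi\<^sub>M {0..<i} (\<lambda>_. M) \<rightarrow>\<^sub>M subprob_algebra M"
    using Suc by (intro measurable_compose[OF _ K_sub] measurable_component_singleton) auto
  moreover have "it_kernels y i = (\<lambda>x. K (x n))" using Suc by (auto simp: it_kernels_def fun_eq_iff)
  ultimately show ?thesis by simp
qed

lemma it_kernels_prob:
  assumes y: "y \<in> space M" and x: "x \<in> space (Pi\<^sub>M {0..<i} (\<lambda>_. M))"
  shows "prob_space (it_kernels y i x)"
proof (cases i)
  case 0 then show ?thesis using y by (simp add: it_kernels_def prob_space_return)
next
  case (Suc n)
  then have "x n \<in> space M" using x by (auto simp: space_PiM)
  then show ?thesis using Suc by (simp add: it_kernels_def K_prob)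
qed

lemma IT_chain: "y \<in> space M \<Longrightarrow> Ionescu_Tulcea (it_kernels y) (\<lambda>_. M)"
  unfolding Ionescu_Tulcea_def using it_kernels_meas it_kernels_prob by blast

definition chain_from :: "'x \<times> (real^2) \<Rightarrow> (nat \<Rightarrow> 'x \<times> (real^2)) measure" where
  "chain_from y = projective_family.lim UNIV (Ionescu_Tulcea.CI (it_kernels y) (\<lambda>_. M)) (\<lambda>_. M)"

lemma chain_from_sets: "y \<in> space M \<Longrightarrow> sets (chain_from y) = sets PS"
proof -
  assume y: "y \<in> space M"
  interpret IT: Ionescu_Tulcea "it_kernels y" "\<lambda>_. M" by (rule IT_chain[OF y])
  show ?thesis by (simp add: chain_from_def)
qed

lemma chain_from_space: "y \<in> space M \<Longrightarrow> space (chain_from y) = space PS"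
  using chain_from_sets by (rule sets_eq_imp_space_eq)

lemma chain_from_fdd:
  assumes y: "y \<in> space M"
  shows "fdd n (chain_from y) = Ionescu_Tulcea.C (it_kernels y) (\<lambda>_. M) 0 n (\<lambda>_. undefined)"
proof -
  interpret IT: Ionescu_Tulcea "it_kernels y" "\<lambda>_. M" by (rule IT_chain[OF y])
  have "fdd n (chain_from y) = IT.CI {0..<n}"
    unfolding fdd_def chain_from_def by (rule IT.distr_lim) simp
  also have "\<dots> = IT.C 0 n (\<lambda>_. undefined)"
  proof (rule measure_eqI)
    show "sets (IT.CI {0..<n}) = sets (IT.C 0 n (\<lambda>_. undefined))"
      by (simp add: IT.CI_def IT.sets_C space_PiM)
    fix X assume "X \<in> sets (IT.CI {0..<n})"
    then have X: "X \<in> sets (Pi\<^sub>M {0..<n} (\<lambda>_. M))" by (simp add: IT.CI_def)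
    have "emeasure (IT.CI {0..<n}) X = emeasure (IT.C 0 n (\<lambda>_. undefined)) (prod_emb {0..<n} (\<lambda>_. M) {0..<n} X)"
      by (rule IT.emeasure_CI[OF subset_refl X])
    also have "prod_emb {0..<n} (\<lambda>_. M) {0..<n} X = X"
      using sets.sets_into_space[OF X] by (intro prod_emb_id) (simp add: space_PiM)
    finally show "emeasure (IT.CI {0..<n}) X = emeasure (IT.C 0 n (\<lambda>_. undefined)) X" .
  qed
  finally show ?thesis .
qed

lemma empty_path_space: "(\<lambda>_. undefined) \<in> space (Pi\<^sub>M {0..<0::nat} (\<lambda>_. M))"
  by (auto simp: space_PiM PiE_iff)

lemma chain_from_prob: "y \<in> space M \<Longrightarrow> prob_space (chain_from y)"
proof -
  assume y: "y \<in> space M"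
  interpret IT: Ionescu_Tulcea "it_kernels y" "\<lambda>_. M" by (rule IT_chain[OF y])
  have "emeasure (fdd 0 (chain_from y)) (space (Pi\<^sub>M {0..<0} (\<lambda>_. M)))
      = emeasure (chain_from y) ((\<lambda>\<omega>. restrict \<omega> {0..<0}) -` space (Pi\<^sub>M {0..<0} (\<lambda>_. M)) \<inter> space (chain_from y))"
    unfolding fdd_def
    by (rule emeasure_distr) (auto simp: measurable_cong_sets[OF chain_from_sets[OF y] refl] intro!: measurable_restrict_subset)
  also have "(\<lambda>\<omega>. restrict \<omega> {0..<0}) -` space (Pi\<^sub>M {0..<0} (\<lambda>_. M)) \<inter> space (chain_from y) = space (chain_from y)"
    by (auto simp: space_PiM)
  finally have "emeasure (chain_from y) (space (chain_from y)) = emeasure (fdd 0 (chain_from y)) (space (Pi\<^sub>M {0..<0} (\<lambda>_. M)))" ..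
  also have "\<dots> = 1"
    using prob_space.emeasure_space_1[OF IT.prob_space_C[OF empty_path_space, of 0]]
    unfolding chain_from_fdd[OF y] IT.space_C[OF empty_path_space] by simp
  finally show ?thesis by (intro prob_spaceI)
qed

(* The transition property on general cylinders {w|[0,n] in X, w_(n+1) in B}; it is
   stable under mixtures and implies the rectangle version. *)
definition cyl_transitions :: "(nat \<Rightarrow> 'x \<times> (real^2)) measure \<Rightarrow> bool" where
  "cyl_transitions P \<longleftrightarrow> (\<forall>n X B. X \<in> sets (Pi\<^sub>M {0..<Suc n} (\<lambda>_. M)) \<longrightarrow> B \<in> sets M \<longrightarrow>
     emeasure P {\<omega>\<in>space PS. restrict \<omega> {0..<Suc n} \<in> X \<and> \<omega> (Suc n) \<in> B}
     = (\<integral>\<^sup>+\<omega>. indicator {\<omega>\<in>space PS. restrict \<omega> {0..<Suc n} \<in> X} \<omega> * emeasure (K (\<omega> n)) B \<partial>P))"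

lemma rect_eq_cyl:
  "{\<omega>\<in>space PS. \<forall>i\<le>n. \<omega> i \<in> A i} = {\<omega>\<in>space PS. restrict \<omega> {0..<Suc n} \<in> Pi\<^sub>E {0..<Suc n} A}"
  by (auto simp: PiE_iff less_Suc_eq_le)

lemma cyl_transitions_rect: "cyl_transitions P \<Longrightarrow> rect_transitions P"
  unfolding rect_transitions_def
proof safe
  fix n and A :: "nat \<Rightarrow> _" and B assume P: "cyl_transitions P" and A: "\<forall>i. A i \<in> sets M" and B: "B \<in> sets M"
  have X: "Pi\<^sub>E {0..<Suc n} A \<in> sets (Pi\<^sub>M {0..<Suc n} (\<lambda>_. M))"
    using A by (intro sets_PiM_I_finite) auto
  have rect_step: "{\<omega>\<in>space PS. (\<forall>i\<le>n. \<omega> i \<in> A i) \<and> \<omega> (Suc n) \<in> B}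
      = {\<omega>\<in>space PS. restrict \<omega> {0..<Suc n} \<in> Pi\<^sub>E {0..<Suc n} A \<and> \<omega> (Suc n) \<in> B}"
    by (auto simp: PiE_iff less_Suc_eq_le)
  show "emeasure P {\<omega>\<in>space PS. (\<forall>i\<le>n. \<omega> i \<in> A i) \<and> \<omega> (Suc n) \<in> B} =
      (\<integral>\<^sup>+\<omega>. indicator {\<omega>\<in>space PS. \<forall>i\<le>n. \<omega> i \<in> A i} \<omega> * emeasure (K (\<omega> n)) B \<partial>P)"
    unfolding rect_step rect_eq_cyl using P X B unfolding cyl_transitions_def by blast
qed

lemma it_step_cylinder:
  assumes y: "y \<in> space M" and x: "x \<in> space (Pi\<^sub>M {0..<Suc n} (\<lambda>_. M))"
    and X: "X \<in> sets (Pi\<^sub>M {0..<Suc n} (\<lambda>_. M))" and B: "B \<in> sets M"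
  shows "emeasure (Ionescu_Tulcea.eP (it_kernels y) (\<lambda>_. M) (Suc n) x)
           {z\<in>space (Pi\<^sub>M {0..<Suc (Suc n)} (\<lambda>_. M)). restrict z {0..<Suc n} \<in> X \<and> z (Suc n) \<in> B}
       = indicator X x * emeasure (K (x n)) B"
proof -
  interpret IT: Ionescu_Tulcea "it_kernels y" "\<lambda>_. M" by (rule IT_chain[OF y])
  define X' where "X' = {z\<in>space (Pi\<^sub>M {0..<Suc (Suc n)} (\<lambda>_. M)). restrict z {0..<Suc n} \<in> X \<and> z (Suc n) \<in> B}"
  have X'[measurable]: "X' \<in> sets (Pi\<^sub>M {0..<Suc (Suc n)} (\<lambda>_. M))"
    unfolding X'_def using X B by measurable
  have "emeasure (IT.eP (Suc n) x) X' = emeasure (it_kernels y (Suc n) x) ((\<lambda>z. x(Suc n := z)) -` X' \<inter> space M)"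
    by (rule IT.emeasure_eP[OF x X'])
  also have "(\<lambda>z. x(Suc n := z)) -` X' \<inter> space M = (if x \<in> X then B else {})"
  proof -
    have "restrict (x(Suc n := z)) {0..<Suc n} = x" for z
      using x by (auto simp: space_PiM PiE_iff extensional_def fun_eq_iff)
    then show ?thesis using x sets.sets_into_space[OF B] unfolding X'_def
      by (auto simp: space_PiM PiE_iff extensional_def)
  qed
  also have "emeasure (it_kernels y (Suc n) x) (if x \<in> X then B else {}) = indicator X x * emeasure (K (x n)) B"
    by (simp add: it_kernels_def)
  finally show ?thesis by (simp only: X'_def)
qed

lemma chain_from_cyl_transitions: "y \<in> space M \<Longrightarrow> cyl_transitions (chain_from y)"
  unfolding cyl_transitions_def
proof safe
  fix n X B assume y: "y \<in> space M"
    and X[measurable]: "X \<in> sets (Pi\<^sub>M {0..<Suc n} (\<lambda>_. M))" and B[measurable]: "B \<in> sets M"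
  interpret IT: Ionescu_Tulcea "it_kernels y" "\<lambda>_. M" by (rule IT_chain[OF y])
  let ?u = "\<lambda>_::nat. undefined :: 'x \<times> (real^2)"
  note sQ = chain_from_sets[OF y]
  define X' where "X' = {x\<in>space (Pi\<^sub>M {0..<Suc (Suc n)} (\<lambda>_. M)). restrict x {0..<Suc n} \<in> X \<and> x (Suc n) \<in> B}"
  have X'[measurable]: "X' \<in> sets (Pi\<^sub>M {0..<Suc (Suc n)} (\<lambda>_. M))"
    unfolding X'_def by measurable
  define g where "g x = indicator X x * emeasure (K (x n)) B" for x :: "nat \<Rightarrow> 'x \<times> (real^2)"
  have [measurable]: "g \<in> borel_measurable (Pi\<^sub>M {0..<Suc n} (\<lambda>_. M))"
    unfolding g_def by measurable
  have "emeasure (chain_from y) {\<omega>\<in>space PS. restrict \<omega> {0..<Suc n} \<in> X \<and> \<omega> (Suc n) \<in> B}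
      = emeasure (fdd (Suc (Suc n)) (chain_from y)) X'"
    unfolding fdd_def using sets_eq_imp_space_eq[OF sQ]
    by (subst emeasure_distr) (auto simp: measurable_cong_sets[OF sQ refl] X'_def space_PiM
         intro!: measurable_restrict_subset arg_cong2[where f=emeasure])
  also have "\<dots> = emeasure (IT.C 0 (Suc n) ?u \<bind> IT.eP (Suc n)) X'"
    unfolding chain_from_fdd[OF y] by (simp only: IT.C.simps add_0)
  also have "\<dots> = (\<integral>\<^sup>+x. emeasure (IT.eP (Suc n) x) X' \<partial>IT.C 0 (Suc n) ?u)"
  proof (rule emeasure_bind[OF _ _ X'])
    show "space (IT.C 0 (Suc n) ?u) \<noteq> {}"
      using IT.prob_space_C[OF empty_path_space, of "Suc n"] by (simp add: prob_space.not_empty)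
    show "IT.eP (Suc n) \<in> IT.C 0 (Suc n) ?u \<rightarrow>\<^sub>M subprob_algebra (Pi\<^sub>M {0..<Suc (Suc n)} (\<lambda>_. M))"
      using IT.measurable_eP[of "Suc n"]
      by (subst measurable_cong_sets[OF IT.sets_C[OF empty_path_space, of "Suc n"] refl]) simp
  qed
  also have "\<dots> = (\<integral>\<^sup>+x. g x \<partial>IT.C 0 (Suc n) ?u)"
    using IT.space_C[OF empty_path_space, of "Suc n"]
    by (intro nn_integral_cong) (simp del: IT.C.simps add: X'_def g_def it_step_cylinder[OF y _ X B])
  also have "\<dots> = (\<integral>\<^sup>+\<omega>. g (restrict \<omega> {0..<Suc n}) \<partial>chain_from y)"
    unfolding chain_from_fdd[OF y, symmetric] fdd_def
    by (subst nn_integral_distr) (auto simp: g_def measurable_cong_sets[OF sQ refl] intro!: measurable_restrict_subset)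
  also have "\<dots> = (\<integral>\<^sup>+\<omega>. indicator {\<omega>\<in>space PS. restrict \<omega> {0..<Suc n} \<in> X} \<omega> * emeasure (K (\<omega> n)) B \<partial>chain_from y)"
    using sets_eq_imp_space_eq[OF sQ] by (intro nn_integral_cong) (auto simp: g_def indicator_def)
  finally show "emeasure (chain_from y) {\<omega>\<in>space PS. restrict \<omega> {0..<Suc n} \<in> X \<and> \<omega> (Suc n) \<in> B} =
    (\<integral>\<^sup>+\<omega>. indicator {\<omega>\<in>space PS. restrict \<omega> {0..<Suc n} \<in> X} \<omega> * emeasure (K (\<omega> n)) B \<partial>chain_from y)" .
qed

lemma it_first_step:
  assumes y: "y \<in> space M"
  shows "Ionescu_Tulcea.C (it_kernels y) (\<lambda>_. M) 0 1 (\<lambda>_. undefined)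
       = return (Pi\<^sub>M {0..<1::nat} (\<lambda>_. M)) ((\<lambda>_. undefined)(0 := y))"
proof -
  interpret IT: Ionescu_Tulcea "it_kernels y" "\<lambda>_. M" by (rule IT_chain[OF y])
  have "IT.C 0 1 (\<lambda>_. undefined) = return (Pi\<^sub>M {0..<0} (\<lambda>_. M)) (\<lambda>_. undefined) \<bind> IT.eP 0"
    by (simp add: One_nat_def)
  also have "\<dots> = IT.eP 0 (\<lambda>_. undefined)"
    by (rule bind_return[OF IT.measurable_eP empty_path_space])
  also have "\<dots> = distr (return M y) (Pi\<^sub>M {0..<1::nat} (\<lambda>_. M)) (fun_upd (\<lambda>_. undefined) 0)"
    by (simp add: IT.eP_def it_kernels_def One_nat_def)
  also have "\<dots> = return (Pi\<^sub>M {0..<1::nat} (\<lambda>_. M)) ((\<lambda>_. undefined)(0 := y))"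
  proof (rule distr_return[OF _ y])
    show "fun_upd (\<lambda>_. undefined) 0 \<in> M \<rightarrow>\<^sub>M Pi\<^sub>M {0..<1::nat} (\<lambda>_. M)"
      by (rule measurable_fun_upd[where J="{0..<0::nat}"]) (auto intro: empty_path_space)
  qed
  finally show ?thesis .
qed

lemma chain_from_init: "y \<in> space M \<Longrightarrow> distr (chain_from y) M (\<lambda>\<omega>. \<omega> 0) = return M y"
proof (rule measure_eqI)
  assume y: "y \<in> space M"
  note sQ = chain_from_sets[OF y]
  show "sets (distr (chain_from y) M (\<lambda>\<omega>. \<omega> 0)) = sets (return M y)" by simp
  fix A assume "A \<in> sets (distr (chain_from y) M (\<lambda>\<omega>. \<omega> 0))"
  then have A: "A \<in> sets M" by simp
  have "emeasure (distr (chain_from y) M (\<lambda>\<omega>. \<omega> 0)) A = emeasure (fdd 1 (chain_from y)) (Pi\<^sub>E {0..<1::nat} (\<lambda>_. A))"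
    using fdd_one[OF sQ A] by simp
  also have "\<dots> = indicator (Pi\<^sub>E {0..<1::nat} (\<lambda>_. A)) ((\<lambda>_. undefined)(0 := y))"
    unfolding chain_from_fdd[OF y] it_first_step[OF y]
    using A by (intro emeasure_return sets_PiM_I_finite) auto
  also have "\<dots> = emeasure (return M y) A"
    using A by (auto simp: indicator_def PiE_iff extensional_def)
  finally show "emeasure (distr (chain_from y) M (\<lambda>\<omega>. \<omega> 0)) A = emeasure (return M y) A" .
qed

lemma it_compositions_independent:
  assumes y: "y \<in> space M" and y': "y' \<in> space M"
  shows "Ionescu_Tulcea.C (it_kernels y) (\<lambda>_. M) (Suc k) n = Ionescu_Tulcea.C (it_kernels y') (\<lambda>_. M) (Suc k) n"
proof -
  interpret IT: Ionescu_Tulcea "it_kernels y" "\<lambda>_. M" by (rule IT_chain[OF y])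
  interpret IT': Ionescu_Tulcea "it_kernels y'" "\<lambda>_. M" by (rule IT_chain[OF y'])
  have eP: "IT.eP (Suc m) = IT'.eP (Suc m)" for m
    by (simp add: IT.eP_def IT'.eP_def it_kernels_def fun_eq_iff)
  show ?thesis
    by (induction n) (simp_all add: fun_eq_iff eP)
qed

lemma chain_from_cylinder:
  assumes y: "y \<in> space M" and X: "X \<in> sets (Pi\<^sub>M {0..<Suc n} (\<lambda>_. M))"
  shows "emeasure (chain_from y) (prod_emb UNIV (\<lambda>_. M) {0..<Suc n} X)
       = emeasure (Ionescu_Tulcea.C (it_kernels y) (\<lambda>_. M) 1 n ((\<lambda>_. undefined)(0 := y))) X"
proof -
  interpret IT: Ionescu_Tulcea "it_kernels y" "\<lambda>_. M" by (rule IT_chain[OF y])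
  have v: "(\<lambda>_. undefined)(0 := y) \<in> space (Pi\<^sub>M {0..<1::nat} (\<lambda>_. M))"
    using y by (auto simp: space_PiM PiE_iff extensional_def)
  have "emeasure (chain_from y) (prod_emb UNIV (\<lambda>_. M) {0..<Suc n} X) = emeasure (fdd (Suc n) (chain_from y)) X"
    unfolding fdd_def by (rule emeasure_distr_restrict[symmetric, OF _ chain_from_sets[OF y] X]) simp
  also have "fdd (Suc n) (chain_from y) = IT.C 0 1 (\<lambda>_. undefined) \<bind> IT.C 1 n"
    unfolding chain_from_fdd[OF y] using IT.split_C[OF empty_path_space, of 1 n] by simp
  also have "\<dots> = IT.C 1 n ((\<lambda>_. undefined)(0 := y))"
    unfolding it_first_step[OF y] using IT.measurable_C[of 1 n] v by (intro bind_return) auto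
  finally show ?thesis .
qed

lemma chain_from_meas: "chain_from \<in> M \<rightarrow>\<^sub>M prob_algebra PS"
proof (rule measurable_prob_algebra_generated[OF sets_PiM Int_stable_prod_algebra prod_algebra_sets_into_space])
  fix a assume "a \<in> space M" then show "prob_space (chain_from a)" "sets (chain_from a) = sets PS"
    by (simp_all add: chain_from_prob chain_from_sets)
next
  obtain y0 where y0: "y0 \<in> space M" using space_M_nonempty by auto
  interpret IT0: Ionescu_Tulcea "it_kernels y0" "\<lambda>_. M" by (rule IT_chain[OF y0])
  fix A assume "A \<in> prod_algebra (UNIV::nat set) (\<lambda>_. M)"
  then obtain J E where AJ: "A = prod_emb (UNIV::nat set) (\<lambda>_. M) J (Pi\<^sub>E J E)" and J: "finite J"
    and E: "\<And>i. i \<in> J \<Longrightarrow> E i \<in> sets M"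
    by (elim prod_algebraE) auto
  obtain k where "J \<subseteq> {..<k}" using finite_nat_bounded[OF J] by auto
  then have n: "J \<subseteq> {0..<Suc k}" by auto
  define X where "X = prod_emb {0..<Suc k} (\<lambda>_. M) J (Pi\<^sub>E J E)"
  have X: "X \<in> sets (Pi\<^sub>M {0..<Suc k} (\<lambda>_. M))"
    unfolding X_def using n E J by (intro sets_PiM_I) (auto intro!: sets_PiM_I_finite)
  have AX: "A = prod_emb UNIV (\<lambda>_. M) {0..<Suc k} X" unfolding AJ X_def using n by simp
  have "(\<lambda>y. emeasure (IT0.C 1 k ((\<lambda>_. undefined)(0 := y))) X) \<in> borel_measurable M"
  proof (rule measurable_compose[OF _ measurable_emeasure_subprob_algebra])
    show "(\<lambda>y. IT0.C 1 k ((\<lambda>_. undefined)(0 := y))) \<in> M \<rightarrow>\<^sub>M subprob_algebra (Pi\<^sub>M {0..<1+k} (\<lambda>_. M))"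
      by (rule measurable_compose[OF _ IT0.measurable_C], rule measurable_fun_upd[where J="{0..<0::nat}"])
         (auto intro: empty_path_space)
    show "X \<in> sets (Pi\<^sub>M {0..<1+k} (\<lambda>_. M))" using X by simp
  qed
  then show "(\<lambda>a. emeasure (chain_from a) A) \<in> borel_measurable M"
  proof (rule measurable_cong[THEN iffD1, rotated])
    fix y assume y: "y \<in> space M"
    show "emeasure (IT0.C 1 k ((\<lambda>_. undefined)(0 := y))) X = emeasure (chain_from y) A"
      unfolding AX chain_from_cylinder[OF y X]
      using it_compositions_independent[OF y y0, of 0 k] by (simp add: One_nat_def)
  qed
qed

lemma chain_from_sub[measurable]: "chain_from \<in> M \<rightarrow>\<^sub>M subprob_algebra PS"
  by (rule measurable_prob_algebraD[OF chain_from_meas])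

lemma cyl_sets[measurable]:
  assumes "X \<in> sets (Pi\<^sub>M {0..<Suc n} (\<lambda>_. M))"
  shows "{\<omega>\<in>space PS. restrict \<omega> {0..<Suc n} \<in> X} \<in> sets PS"
  using assms by measurable

context
  fixes lam :: "('x \<times> (real^2)) measure"
  assumes sl: "sets lam = sets M"
begin

lemma bind_chain_sets: "sets (lam \<bind> chain_from) = sets PS"
  using space_M_nonempty sets_eq_imp_space_eq[OF sl]
  by (intro sets_bind[where N=PS]) (auto simp: chain_from_sets)

lemma bind_chain_emeasure:
  "A \<in> sets PS \<Longrightarrow> emeasure (lam \<bind> chain_from) A = (\<integral>\<^sup>+y. emeasure (chain_from y) A \<partial>lam)"
  using space_M_nonempty sets_eq_imp_space_eq[OF sl]
  by (intro emeasure_bind) (auto simp: measurable_cong_sets[OF sl refl])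

lemma bind_chain_total: "emeasure (lam \<bind> chain_from) (space (lam \<bind> chain_from)) = emeasure lam (space lam)"
proof -
  have "emeasure (lam \<bind> chain_from) (space (lam \<bind> chain_from)) = (\<integral>\<^sup>+y. emeasure (chain_from y) (space PS) \<partial>lam)"
    using bind_chain_emeasure[of "space PS"] sets_eq_imp_space_eq[OF bind_chain_sets] by simp
  also have "\<dots> = (\<integral>\<^sup>+y. 1 \<partial>lam)"
    using sets_eq_imp_space_eq[OF sl]
    by (intro nn_integral_cong) (simp add: prob_space.emeasure_space_1[OF chain_from_prob] chain_from_space[symmetric])
  finally show ?thesis by simp
qed

lemma bind_chain_prob: "prob_space lam \<Longrightarrow> prob_space (lam \<bind> chain_from)"
  by (rule prob_spaceI) (simp add: bind_chain_total prob_space.emeasure_space_1)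

lemma bind_chain_cyl_transitions: "cyl_transitions (lam \<bind> chain_from)"
  unfolding cyl_transitions_def
proof safe
  fix n X B assume X[measurable]: "X \<in> sets (Pi\<^sub>M {0..<Suc n} (\<lambda>_. M))" and B[measurable]: "B \<in> sets M"
  let ?S = "{\<omega>\<in>space PS. restrict \<omega> {0..<Suc n} \<in> X \<and> \<omega> (Suc n) \<in> B}"
  let ?F = "\<lambda>\<omega>. indicator {\<omega>\<in>space PS. restrict \<omega> {0..<Suc n} \<in> X} \<omega> * emeasure (K (\<omega> n)) B"
  have "?S \<in> sets PS" by measurable
  then have "emeasure (lam \<bind> chain_from) ?S = (\<integral>\<^sup>+y. emeasure (chain_from y) ?S \<partial>lam)"
    by (rule bind_chain_emeasure)
  also have "\<dots> = (\<integral>\<^sup>+y. (\<integral>\<^sup>+\<omega>. ?F \<omega> \<partial>chain_from y) \<partial>lam)"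
    using chain_from_cyl_transitions X B sets_eq_imp_space_eq[OF sl]
    unfolding cyl_transitions_def by (intro nn_integral_cong) simp
  also have "\<dots> = (\<integral>\<^sup>+\<omega>. ?F \<omega> \<partial>(lam \<bind> chain_from))"
  proof (rule nn_integral_bind[symmetric])
    show "?F \<in> borel_measurable PS" by measurable
    show "chain_from \<in> lam \<rightarrow>\<^sub>M subprob_algebra PS"
      by (subst measurable_cong_sets[OF sl refl]) (rule chain_from_sub)
  qed
  finally show "emeasure (lam \<bind> chain_from) ?S = (\<integral>\<^sup>+\<omega>. ?F \<omega> \<partial>(lam \<bind> chain_from))" .
qed

lemma bind_chain_init: "distr (lam \<bind> chain_from) M (\<lambda>\<omega>. \<omega> 0) = lam"
proof (rule measure_eqI)
  show "sets (distr (lam \<bind> chain_from) M (\<lambda>\<omega>. \<omega> 0)) = sets lam" by (simp add: sl)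
  fix A assume "A \<in> sets (distr (lam \<bind> chain_from) M (\<lambda>\<omega>. \<omega> 0))"
  then have A[measurable]: "A \<in> sets M" by simp
  have "emeasure (distr (lam \<bind> chain_from) M (\<lambda>\<omega>. \<omega> 0)) A = emeasure (lam \<bind> chain_from) ((\<lambda>\<omega>. \<omega> 0) -` A \<inter> space PS)"
    using sets_eq_imp_space_eq[OF bind_chain_sets]
    by (subst emeasure_distr) (auto simp: measurable_cong_sets[OF bind_chain_sets refl])
  also have "\<dots> = (\<integral>\<^sup>+y. emeasure (chain_from y) ((\<lambda>\<omega>. \<omega> 0) -` A \<inter> space PS) \<partial>lam)"
    by (rule bind_chain_emeasure) measurable
  also have "\<dots> = (\<integral>\<^sup>+y. indicator A y \<partial>lam)"
  proof (rule nn_integral_cong)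
    fix y assume "y \<in> space lam"
    then have y: "y \<in> space M" using sets_eq_imp_space_eq[OF sl] by simp
    have "emeasure (chain_from y) ((\<lambda>\<omega>. \<omega> 0) -` A \<inter> space PS) = emeasure (distr (chain_from y) M (\<lambda>\<omega>. \<omega> 0)) A"
      using chain_from_space[OF y]
      by (subst emeasure_distr) (auto simp: measurable_cong_sets[OF chain_from_sets[OF y] refl])
    then show "emeasure (chain_from y) ((\<lambda>\<omega>. \<omega> 0) -` A \<inter> space PS) = indicator A y"
      unfolding chain_from_init[OF y] using A by simp
  qed
  also have "\<dots> = emeasure lam A" using A sl by simp
  finally show "emeasure (distr (lam \<bind> chain_from) M (\<lambda>\<omega>. \<omega> 0)) A = emeasure lam A" .
qed

lemma chain_eq_bind:
  assumes fl: "finite_measure lam" and fP: "finite_measure P" and sP: "sets P = sets PS"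
    and R: "rect_transitions P" and init: "distr P M (\<lambda>\<omega>. \<omega> 0) = lam"
  shows "P = lam \<bind> chain_from"
  by (rule chain_unique[OF fP sP bind_chain_sets])
     (simp_all add: init bind_chain_init R cyl_transitions_rect[OF bind_chain_cyl_transitions])

end

lemma transition_integral_ennreal:
  assumes pP: "prob_space P" and sP: "sets P = sets PS" and C: "C \<in> sets PS" and B: "B \<in> sets M"
  shows "(\<integral>\<^sup>+\<omega>. indicator C \<omega> * emeasure (K (\<omega> n)) B \<partial>P) = ennreal (\<integral>\<omega>. indicator C \<omega> * measure (K (\<omega> n)) B \<partial>P)"
proof -
  interpret prob_space P by fact
  have Kn: "\<omega> \<in> space P \<Longrightarrow> prob_space (K (\<omega> n))" for \<omega>
    using sets_eq_imp_space_eq[OF sP] by (auto simp: space_PiM intro: K_prob)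
  have "(\<integral>\<^sup>+\<omega>. indicator C \<omega> * emeasure (K (\<omega> n)) B \<partial>P) = (\<integral>\<^sup>+\<omega>. ennreal (indicator C \<omega> * measure (K (\<omega> n)) B) \<partial>P)"
    by (intro nn_integral_cong) (simp add: ennreal_mult indicator_def finite_measure.emeasure_eq_measure[OF prob_space.finite_measure[OF Kn]])
  also have "\<dots> = ennreal (\<integral>\<omega>. indicator C \<omega> * measure (K (\<omega> n)) B \<partial>P)"
  proof (rule nn_integral_eq_integral)
    show "integrable P (\<lambda>\<omega>. indicator C \<omega> * measure (K (\<omega> n)) B)"
    proof (rule integrable_const_bound[where B=1])
      show "AE x in P. norm (indicator C x * measure (K (x n)) B) \<le> 1"
        using prob_space.prob_le_1[OF Kn] by (intro AE_I2) (auto simp: indicator_def)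
      show "(\<lambda>\<omega>. indicator C \<omega> * measure (K (\<omega> n)) B) \<in> borel_measurable P"
        unfolding measurable_cong_sets[OF sP refl] using C B by measurable
    qed
  qed (auto simp: indicator_def)
  finally show ?thesis .
qed

lemma is_chain_law_rect:
  assumes chain: "is_chain_law Xs K \<nu> P" shows "rect_transitions P"
proof -
  have pP: "prob_space P" and sP: "sets P = sets PS"
    using chain by (auto simp: is_chain_law_def path_space_eq)
  interpret prob_space P by fact
  show ?thesis unfolding rect_transitions_def
  proof safe
    fix n and A :: "nat \<Rightarrow> _" and B assume A: "\<forall>i. A i \<in> sets M" and B: "B \<in> sets M"
    have "measure P {\<omega>\<in>space PS. (\<forall>i\<le>n. \<omega> i \<in> A i) \<and> \<omega> (Suc n) \<in> B}
        = (\<integral>\<omega>. indicator {\<omega>\<in>space PS. \<forall>i\<le>n. \<omega> i \<in> A i} \<omega> * measure (K (\<omega> n)) B \<partial>P)"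
      using chain A B sets_eq_imp_space_eq[OF sP] unfolding is_chain_law_def by auto
    then show "emeasure P {\<omega>\<in>space PS. (\<forall>i\<le>n. \<omega> i \<in> A i) \<and> \<omega> (Suc n) \<in> B} =
      (\<integral>\<^sup>+\<omega>. indicator {\<omega>\<in>space PS. \<forall>i\<le>n. \<omega> i \<in> A i} \<omega> * emeasure (K (\<omega> n)) B \<partial>P)"
      using A B by (simp add: transition_integral_ennreal[OF pP sP _ B] emeasure_eq_measure)
  qed
qed

lemma bind_chain_is_chain_law:
  assumes pn: "prob_space \<nu>" and sn: "sets \<nu> = sets M"
  shows "is_chain_law Xs K \<nu> (\<nu> \<bind> chain_from)"
proof -
  note pP = bind_chain_prob[OF sn pn] and sP = bind_chain_sets[OF sn]
  interpret prob_space "\<nu> \<bind> chain_from" by fact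
  have R: "rect_transitions (\<nu> \<bind> chain_from)"
    by (rule cyl_transitions_rect[OF bind_chain_cyl_transitions[OF sn]])
  show ?thesis unfolding is_chain_law_def path_space_eq sets_eq_imp_space_eq[OF sP]
  proof (intro conjI allI impI)
    show "distr (\<nu> \<bind> chain_from) M (\<lambda>\<omega>. \<omega> 0) = \<nu>" by (rule bind_chain_init[OF sn])
    fix n and A :: "nat \<Rightarrow> _" and B assume A: "\<forall>i. A i \<in> sets M" and B: "B \<in> sets M"
    have "ennreal (measure (\<nu> \<bind> chain_from) {\<omega>\<in>space PS. (\<forall>i\<le>n. \<omega> i \<in> A i) \<and> \<omega> (Suc n) \<in> B}) =
      ennreal (\<integral>\<omega>. indicator {\<omega>\<in>space PS. \<forall>i\<le>n. \<omega> i \<in> A i} \<omega> * measure (K (\<omega> n)) B \<partial>(\<nu> \<bind> chain_from))"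
      using R A B unfolding rect_transitions_def
      by (simp add: transition_integral_ennreal[OF pP sP _ B] emeasure_eq_measure)
    moreover have "0 \<le> (\<integral>\<omega>. indicator {\<omega>\<in>space PS. \<forall>i\<le>n. \<omega> i \<in> A i} \<omega> * measure (K (\<omega> n)) B \<partial>(\<nu> \<bind> chain_from))"
      by (intro integral_nonneg_AE AE_I2) auto
    ultimately show "measure (\<nu> \<bind> chain_from) {\<omega>\<in>space PS. (\<forall>i\<le>n. \<omega> i \<in> A i) \<and> \<omega> (Suc n) \<in> B} =
      (\<integral>\<omega>. indicator {\<omega>\<in>space PS. \<forall>i\<le>n. \<omega> i \<in> A i} \<omega> * measure (K (\<omega> n)) B \<partial>(\<nu> \<bind> chain_from))"
      by simp
  qed (use pP sP in auto)
qed

lemma chain_law_eq: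
  assumes pn: "prob_space \<nu>" and sn: "sets \<nu> = sets M"
  shows "chain_law Xs K \<nu> = \<nu> \<bind> chain_from"
  unfolding chain_law_def
proof (rule the_equality)
  show "is_chain_law Xs K \<nu> (\<nu> \<bind> chain_from)" by (rule bind_chain_is_chain_law[OF assms])
  fix P assume P: "is_chain_law Xs K \<nu> P"
  then have pP: "prob_space P" and sP: "sets P = sets PS" and init: "distr P M (\<lambda>\<omega>. \<omega> 0) = \<nu>"
    by (auto simp: is_chain_law_def path_space_eq)
  show "P = \<nu> \<bind> chain_from"
    by (rule chain_eq_bind[OF sn prob_space.finite_measure[OF pn] prob_space.finite_measure[OF pP] sP
          is_chain_law_rect[OF P] init])
qed

lemma state_measure_eqI:
  assumes s1: "sets N1 = sets M" and s2: "sets N2 = sets M" and f1: "finite_measure N1"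
    and eq: "\<And>A B. A \<in> sets Xs \<Longrightarrow> B \<in> sets (borel :: (real^2) measure) \<Longrightarrow> emeasure N1 (A \<times> B) = emeasure N2 (A \<times> B)"
  shows "N1 = N2"
proof (rule measure_eqI_generator_eq[OF Int_stable_pair_measure_generator[of Xs "borel :: (real^2) measure"]])
  let ?G = "{a \<times> b |a b. a \<in> sets Xs \<and> b \<in> sets (borel :: (real^2) measure)}"
  show "?G \<subseteq> Pow (space Xs \<times> space (borel :: (real^2) measure))"
    using sets.sets_into_space by fastforce
  show "sets N1 = sigma_sets (space Xs \<times> space borel) ?G" "sets N2 = sigma_sets (space Xs \<times> space borel) ?G"
    using s1 s2 by (simp_all add: state_space_def sets_pair_measure)
  have "space Xs \<times> space (borel :: (real^2) measure) \<in> ?G" by blast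
  then show "range (\<lambda>_::nat. space Xs \<times> space (borel :: (real^2) measure)) \<subseteq> ?G" by auto
  show "(\<Union>i::nat. space Xs \<times> space (borel :: (real^2) measure)) = space Xs \<times> space borel" by simp
  show "emeasure N1 (space Xs \<times> space (borel :: (real^2) measure)) \<noteq> \<infinity>" for i :: nat
    using finite_measure.emeasure_finite[OF f1] by (simp add: infinity_ennreal_def)
  fix X assume "X \<in> ?G"
  then show "emeasure N1 X = emeasure N2 X" using eq by blast
qed

lemma initial_law_eq:
  assumes pm: "prob_space \<mu>" and sm: "sets \<mu> = sets Xs"
  shows "\<mu> \<Otimes>\<^sub>M return (borel :: (real^2) measure) 0 = distr \<mu> M (\<lambda>x. (x, 0))"
proof (rule state_measure_eqI[symmetric])
  have mf: "(\<lambda>x. (x, 0::real^2)) \<in> \<mu> \<rightarrow>\<^sub>M M"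
    unfolding state_space_def measurable_cong_sets[OF sm refl] by measurable
  show "sets (distr \<mu> M (\<lambda>x. (x, 0))) = sets M" by simp
  show "sets (\<mu> \<Otimes>\<^sub>M return (borel :: (real^2) measure) 0) = sets M"
    unfolding state_space_def by (rule sets_pair_measure_cong[OF sm]) simp
  show "finite_measure (distr \<mu> M (\<lambda>x. (x, 0)))"
    by (rule finite_measure.finite_measure_distr[OF prob_space.finite_measure[OF pm] mf])
  fix A B assume A: "A \<in> sets Xs" and B: "B \<in> sets (borel :: (real^2) measure)"
  interpret R: prob_space "return (borel :: (real^2) measure) 0" by (rule prob_space_return) simp
  have "emeasure (distr \<mu> M (\<lambda>x. (x, 0))) (A \<times> B) = emeasure \<mu> ((\<lambda>x. (x, 0)) -` (A \<times> B) \<inter> space \<mu>)"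
    using A B by (intro emeasure_distr[OF mf]) (simp add: state_space_def pair_measureI)
  also have "\<dots> = emeasure \<mu> A * indicator B 0"
    using sets.sets_into_space[OF A] sets_eq_imp_space_eq[OF sm] by (auto simp: indicator_def Int_absorb2)
  also have "\<dots> = emeasure (\<mu> \<Otimes>\<^sub>M return (borel :: (real^2) measure) 0) (A \<times> B)"
    using R.emeasure_pair_measure_Times[of A \<mu> B] A B sm by simp
  finally show "emeasure (distr \<mu> M (\<lambda>x. (x, 0))) (A \<times> B) = emeasure (\<mu> \<Otimes>\<^sub>M return borel 0) (A \<times> B)" .
qed

lemma P0_eq_bind:
  assumes pm: "prob_space \<mu>" and sm: "sets \<mu> = sets Xs"
  shows "P0 Xs K \<mu> = distr \<mu> M (\<lambda>x. (x, 0)) \<bind> chain_from"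
proof -
  have mf: "(\<lambda>x. (x, 0::real^2)) \<in> \<mu> \<rightarrow>\<^sub>M M"
    unfolding state_space_def measurable_cong_sets[OF sm refl] by measurable
  show ?thesis
    unfolding P0_def initial_law_eq[OF pm sm]
    by (rule chain_law_eq) (simp_all add: prob_space.prob_space_distr[OF pm mf])
qed

lemma P0_point:
  assumes x: "x \<in> space Xs"
  shows "P0 Xs K (return Xs x) = chain_from (x, 0)"
proof -
  have mf: "(\<lambda>x. (x, 0::real^2)) \<in> Xs \<rightarrow>\<^sub>M M"
    unfolding state_space_def by measurable
  have x0: "(x, 0) \<in> space M" using x by (simp add: space_M)
  have "P0 Xs K (return Xs x) = distr (return Xs x) M (\<lambda>x. (x, 0)) \<bind> chain_from"
    using x by (simp add: P0_eq_bind prob_space_return)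
  also have "\<dots> = chain_from (x, 0)"
    unfolding distr_return[OF mf x] by (rule bind_return[OF chain_from_sub x0])
  finally show ?thesis .
qed

lemma pshift_meas[measurable]: "pshift n \<in> PS \<rightarrow>\<^sub>M PS"
  unfolding pshift_def by (rule measurable_PiM_single') (auto simp: space_PiM PiE_iff)

(* The path from time n on, under P restricted to the event C (not normalised). *)
definition cond_shift :: "nat \<Rightarrow> (nat \<Rightarrow> 'x \<times> (real^2)) set \<Rightarrow> (nat \<Rightarrow> 'x \<times> (real^2)) measure
    \<Rightarrow> (nat \<Rightarrow> 'x \<times> (real^2)) measure" where
  "cond_shift n C P = distr (density P (indicator C)) PS (pshift n)"

lemma cond_shift_sets: "sets (cond_shift n C P) = sets PS"
  by (simp add: cond_shift_def)

lemma density_restrict_emeasure: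
  assumes sP: "sets P = sets PS" and C: "C \<in> sets PS" and E: "E \<in> sets PS"
  shows "emeasure (density P (indicator C)) E = emeasure P (C \<inter> E)"
proof -
  have "emeasure (density P (indicator C)) E = (\<integral>\<^sup>+x. indicator C x * indicator E x \<partial>P)"
    using sP C E by (intro emeasure_density) (simp_all add: measurable_cong_sets[OF sP refl])
  also have "\<dots> = (\<integral>\<^sup>+x. indicator (C \<inter> E) x \<partial>P)" by (intro nn_integral_cong) (auto simp: indicator_def)
  also have "\<dots> = emeasure P (C \<inter> E)" using C E sP by simp
  finally show ?thesis .
qed

lemma cond_shift_emeasure:
  assumes sP: "sets P = sets PS" and C: "C \<in> sets PS" and G: "G \<in> sets PS"
  shows "emeasure (cond_shift n C P) G = emeasure P (C \<inter> pshift n -` G)"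
proof -
  have sD: "sets (density P (indicator C)) = sets PS" by (simp add: sP)
  have "emeasure (cond_shift n C P) G = emeasure (density P (indicator C)) (pshift n -` G \<inter> space PS)"
    unfolding cond_shift_def using sets_eq_imp_space_eq[OF sD]
    by (subst emeasure_distr) (simp_all add: measurable_cong_sets[OF sD refl] G)
  also have "\<dots> = emeasure P (C \<inter> (pshift n -` G \<inter> space PS))"
    by (rule density_restrict_emeasure[OF sP C measurable_sets[OF pshift_meas G]])
  also have "C \<inter> (pshift n -` G \<inter> space PS) = C \<inter> pshift n -` G"
    using sets.sets_into_space[OF C] by auto
  finally show ?thesis .
qed

lemma cond_shift_finite:
  assumes fP: "finite_measure P" and sP: "sets P = sets PS" and C: "C \<in> sets PS"
  shows "finite_measure (cond_shift n C P)"
proof (rule finite_measureI)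
  interpret finite_measure P by fact
  have "emeasure (cond_shift n C P) (space (cond_shift n C P)) = emeasure P (C \<inter> pshift n -` space PS)"
    using sets_eq_imp_space_eq[OF cond_shift_sets] by (simp add: cond_shift_emeasure[OF sP C])
  then show "emeasure (cond_shift n C P) (space (cond_shift n C P)) \<noteq> \<infinity>" by simp
qed

lemma cond_shift_init:
  assumes sP: "sets P = sets PS"
  shows "distr (cond_shift n C P) M (\<lambda>\<omega>. \<omega> 0) = distr (density P (indicator C)) M (\<lambda>\<omega>. \<omega> n)"
proof -
  have sD: "sets (density P (indicator C)) = sets PS" by (simp add: sP)
  show ?thesis unfolding cond_shift_def
    by (subst distr_distr) (auto simp: measurable_cong_sets[OF sD refl] comp_def pshift_def)
qed

lemma joined_cylinder_sets:
  assumes X: "X \<in> sets (Pi\<^sub>M {0..<Suc n} (\<lambda>_. M))" and A: "\<And>i. A i \<in> sets M"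
  shows "{x\<in>space (Pi\<^sub>M {0..<Suc (n+m)} (\<lambda>_. M)). restrict x {0..<Suc n} \<in> X \<and> (\<forall>i\<le>m. x (n + i) \<in> A i)}
           \<in> sets (Pi\<^sub>M {0..<Suc (n+m)} (\<lambda>_. M))"
proof -
  let ?Y = "Pi\<^sub>M {0..<Suc (n+m)} (\<lambda>_. M)"
  have "(\<lambda>x. restrict x {0..<Suc n}) \<in> ?Y \<rightarrow>\<^sub>M Pi\<^sub>M {0..<Suc n} (\<lambda>_. M)"
    by (rule measurable_restrict_subset) auto
  from measurable_sets[OF this X]
  have "{x\<in>space ?Y. restrict x {0..<Suc n} \<in> X} \<in> sets ?Y" by (simp add: vimage_def Int_def conj_commute)
  moreover have "{x\<in>space ?Y. x (n + i) \<in> A i} \<in> sets ?Y" if "i \<le> m" for i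
  proof -
    have "(\<lambda>x. x (n + i)) \<in> ?Y \<rightarrow>\<^sub>M M"
      using that by (intro measurable_component_singleton) auto
    from measurable_sets[OF this A] show ?thesis by (simp add: vimage_def Int_def conj_commute)
  qed
  ultimately have "{x\<in>space ?Y. restrict x {0..<Suc n} \<in> X} \<inter> (\<Inter>i\<in>{..m}. {x\<in>space ?Y. x (n + i) \<in> A i}) \<in> sets ?Y"
    by (intro sets.Int sets.finite_INT) auto
  also have "{x\<in>space ?Y. restrict x {0..<Suc n} \<in> X} \<inter> (\<Inter>i\<in>{..m}. {x\<in>space ?Y. x (n + i) \<in> A i})
      = {x\<in>space ?Y. restrict x {0..<Suc n} \<in> X \<and> (\<forall>i\<le>m. x (n + i) \<in> A i)}"
    by auto
  finally show ?thesis .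
qed

(* The path after time n, restricted to a cylinder event up to time n, again has the
   transition property: rectangles after time n are cylinders up to time n + m. *)
lemma cond_shift_rect_transitions:
  assumes sP: "sets P = sets PS" and GP: "cyl_transitions P"
    and X[measurable]: "X \<in> sets (Pi\<^sub>M {0..<Suc n} (\<lambda>_. M))"
    and C_def: "C = {\<omega>\<in>space PS. restrict \<omega> {0..<Suc n} \<in> X}"
  shows "rect_transitions (cond_shift n C P)"
  unfolding rect_transitions_def
proof safe
  fix m and A :: "nat \<Rightarrow> _" and B assume "\<forall>i. A i \<in> sets M" and B[measurable]: "B \<in> sets M"
  then have A[measurable]: "A i \<in> sets M" for i by auto
  have C[measurable]: "C \<in> sets PS" unfolding C_def by measurable
  define D where "D = density P (indicator C)"
  have sD: "sets D = sets PS" by (simp add: D_def sP)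
  note mD = measurable_cong_sets[OF sD refl]
  define X' where "X' = {x\<in>space (Pi\<^sub>M {0..<Suc (n+m)} (\<lambda>_. M)). restrict x {0..<Suc n} \<in> X \<and> (\<forall>i\<le>m. x (n + i) \<in> A i)}"
  have X'[measurable]: "X' \<in> sets (Pi\<^sub>M {0..<Suc (n+m)} (\<lambda>_. M))"
    unfolding X'_def using X A by (rule joined_cylinder_sets)
  define R where "R = {\<omega>\<in>space PS. \<forall>i\<le>m. \<omega> i \<in> A i}"
  have R[measurable]: "R \<in> sets PS" unfolding R_def by measurable
  have restr: "restrict (restrict \<omega> {0..<Suc (n + m)}) {0..<Suc n} = restrict \<omega> {0..<Suc n}" for \<omega> :: "nat \<Rightarrow> _"
    by (auto simp: fun_eq_iff)
  have shift_space: "\<omega> \<in> space PS \<Longrightarrow> pshift n \<omega> \<in> space PS" for \<omega>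
    using measurable_space[OF pshift_meas] by blast
  have "emeasure (cond_shift n C P) {\<omega>\<in>space PS. (\<forall>i\<le>m. \<omega> i \<in> A i) \<and> \<omega> (Suc m) \<in> B}
      = emeasure P (C \<inter> pshift n -` {\<omega>\<in>space PS. (\<forall>i\<le>m. \<omega> i \<in> A i) \<and> \<omega> (Suc m) \<in> B})"
    by (rule cond_shift_emeasure[OF sP C]) measurable
  also have "C \<inter> pshift n -` {\<omega>\<in>space PS. (\<forall>i\<le>m. \<omega> i \<in> A i) \<and> \<omega> (Suc m) \<in> B}
      = {\<omega>\<in>space PS. restrict \<omega> {0..<Suc (n+m)} \<in> X' \<and> \<omega> (Suc (n+m)) \<in> B}"
    unfolding C_def X'_def using shift_space by (auto simp: restr space_PiM PiE_iff pshift_def)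
  also have "emeasure P \<dots> = (\<integral>\<^sup>+\<omega>. indicator {\<omega>\<in>space PS. restrict \<omega> {0..<Suc (n+m)} \<in> X'} \<omega> * emeasure (K (\<omega> (n+m))) B \<partial>P)"
    using GP X' B unfolding cyl_transitions_def by blast
  also have "\<dots> = (\<integral>\<^sup>+\<omega>. indicator C \<omega> * (indicator R (pshift n \<omega>) * emeasure (K (pshift n \<omega> m)) B) \<partial>P)"
    using sets_eq_imp_space_eq[OF sP] shift_space unfolding C_def X'_def R_def
    by (intro nn_integral_cong) (auto simp: indicator_def restr space_PiM PiE_iff pshift_def)
  also have "\<dots> = (\<integral>\<^sup>+\<omega>. indicator R (pshift n \<omega>) * emeasure (K (pshift n \<omega> m)) B \<partial>D)"
    unfolding D_def by (rule nn_integral_density[symmetric]) (simp_all add: measurable_cong_sets[OF sP refl])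
  also have "\<dots> = (\<integral>\<^sup>+\<omega>. indicator R \<omega> * emeasure (K (\<omega> m)) B \<partial>cond_shift n C P)"
    unfolding cond_shift_def D_def[symmetric] by (subst nn_integral_distr) (simp_all add: mD)
  finally show "emeasure (cond_shift n C P) {\<omega>\<in>space PS. (\<forall>i\<le>m. \<omega> i \<in> A i) \<and> \<omega> (Suc m) \<in> B} =
     (\<integral>\<^sup>+\<omega>. indicator {\<omega>\<in>space PS. \<forall>i\<le>m. \<omega> i \<in> A i} \<omega> * emeasure (K (\<omega> m)) B \<partial>cond_shift n C P)"
    unfolding R_def .
qed

lemma markov_property:
  assumes fP: "finite_measure P" and sP: "sets P = sets PS" and GP: "cyl_transitions P"
    and X[measurable]: "X \<in> sets (Pi\<^sub>M {0..<Suc n} (\<lambda>_. M))" and G[measurable]: "G \<in> sets PS"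
  shows "emeasure P ({\<omega>\<in>space PS. restrict \<omega> {0..<Suc n} \<in> X} \<inter> pshift n -` G)
       = (\<integral>\<^sup>+\<omega>. indicator {\<omega>\<in>space PS. restrict \<omega> {0..<Suc n} \<in> X} \<omega> * emeasure (chain_from (\<omega> n)) G \<partial>P)"
proof -
  define C where "C = {\<omega>\<in>space PS. restrict \<omega> {0..<Suc n} \<in> X}"
  have C[measurable]: "C \<in> sets PS" unfolding C_def by measurable
  define D where "D = density P (indicator C)"
  have sD: "sets D = sets PS" by (simp add: D_def sP)
  note mD = measurable_cong_sets[OF sD refl]
  define lam where "lam = distr D M (\<lambda>\<omega>. \<omega> n)"
  have sl: "sets lam = sets M" by (simp add: lam_def)
  have fl: "finite_measure lam"
  proof -
    have "finite_measure (distr (cond_shift n C P) M (\<lambda>\<omega>. \<omega> 0))"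
      using cond_shift_finite[OF fP sP C]
      by (rule finite_measure.finite_measure_distr) (simp add: measurable_cong_sets[OF cond_shift_sets refl])
    then show ?thesis unfolding lam_def D_def cond_shift_init[OF sP] .
  qed
  have shift_eq: "cond_shift n C P = lam \<bind> chain_from"
    using cond_shift_rect_transitions[OF sP GP X C_def] cond_shift_init[OF sP]
    by (intro chain_eq_bind[OF sl fl cond_shift_finite[OF fP sP C] cond_shift_sets]) (simp_all add: lam_def D_def)
  have "emeasure P (C \<inter> pshift n -` G) = emeasure (cond_shift n C P) G"
    by (rule cond_shift_emeasure[OF sP C G, symmetric])
  also have "\<dots> = (\<integral>\<^sup>+y. emeasure (chain_from y) G \<partial>lam)"
    unfolding shift_eq by (rule bind_chain_emeasure[OF sl G])
  also have "\<dots> = (\<integral>\<^sup>+\<omega>. emeasure (chain_from (\<omega> n)) G \<partial>D)"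
    unfolding lam_def by (subst nn_integral_distr) (simp_all add: mD)
  also have "\<dots> = (\<integral>\<^sup>+\<omega>. indicator C \<omega> * emeasure (chain_from (\<omega> n)) G \<partial>P)"
    unfolding D_def by (subst nn_integral_density) (simp_all add: measurable_cong_sets[OF sP refl])
  finally show ?thesis unfolding C_def .
qed

end

definition trn :: "real^2 \<Rightarrow> 'x \<times> (real^2) \<Rightarrow> 'x \<times> (real^2)" where
  "trn t y = (fst y, snd y + t)"

definition transl :: "real^2 \<Rightarrow> (nat \<Rightarrow> 'x \<times> (real^2)) \<Rightarrow> (nat \<Rightarrow> 'x \<times> (real^2))" where
  "transl t \<omega> = (\<lambda>i. trn t (\<omega> i))"

locale markov_random_walk = chain_kernel +
  assumes MRW: "\<And>x s A B. x \<in> space Xs \<Longrightarrow> A \<in> sets Xs \<Longrightarrow> B \<in> sets (borel :: (real^2) measure) \<Longrightarrow>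
        measure (K (x, s)) (A \<times> B) = measure (K (x, 0)) (A \<times> ((\<lambda>t. t - s) ` B))"
begin

lemma trn_meas[measurable]: "trn t \<in> M \<rightarrow>\<^sub>M M"
  unfolding trn_def[abs_def] state_space_def by measurable

lemma trn_space: "y \<in> space M \<Longrightarrow> trn t y \<in> space M"
  by (auto simp: trn_def space_M mem_Times_iff)

lemma transl_meas[measurable]: "transl t \<in> PS \<rightarrow>\<^sub>M PS"
  unfolding transl_def
proof (rule measurable_PiM_single')
  fix i show "(\<lambda>\<omega>. trn t (\<omega> i)) \<in> PS \<rightarrow>\<^sub>M M"
    by (rule measurable_compose[OF measurable_component_singleton[of i UNIV "\<lambda>_. M"] trn_meas]) simp
qed (auto simp: space_PiM PiE_iff trn_space)

lemma K_translate_origin: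
  assumes x: "x \<in> space Xs"
  shows "K (x, s) = distr (K (x, 0)) M (trn s)"
proof (rule state_measure_eqI)
  have xs: "(x, s) \<in> space M" "(x, 0) \<in> space M" using x by (auto simp: space_M)
  show "sets (K (x, s)) = sets M" by (rule K_sets[OF xs(1)])
  show "sets (distr (K (x, 0)) M (trn s)) = sets M" by simp
  show "finite_measure (K (x, s))" by (rule prob_space.finite_measure[OF K_prob[OF xs(1)]])
  fix A B assume A: "A \<in> sets Xs" and B: "B \<in> sets (borel :: (real^2) measure)"
  have sp: "space (K (x, 0)) = space Xs \<times> UNIV"
    using sets_eq_imp_space_eq[OF K_sets[OF xs(2)]] by (simp add: space_M)
  have AB: "A \<times> B \<in> sets M" using A B by (simp add: state_space_def pair_measureI)
  have "emeasure (distr (K (x, 0)) M (trn s)) (A \<times> B) = emeasure (K (x, 0)) (trn s -` (A \<times> B) \<inter> space (K (x, 0)))"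
    by (rule emeasure_distr[OF _ AB]) (simp add: measurable_cong_sets[OF K_sets[OF xs(2)] refl])
  also have "trn s -` (A \<times> B) \<inter> space (K (x, 0)) = A \<times> ((\<lambda>t. t - s) ` B)"
  proof -
    have "b \<in> (\<lambda>t. t - s) ` B \<longleftrightarrow> b + s \<in> B" for b
      by (auto intro: rev_image_eqI[of "b + s"])
    then show ?thesis using sets.sets_into_space[OF A] unfolding sp by (auto simp: trn_def)
  qed
  also have "emeasure (K (x, 0)) (A \<times> ((\<lambda>t. t - s) ` B)) = emeasure (K (x, s)) (A \<times> B)"
    using MRW[OF x A B] prob_space.finite_measure[OF K_prob[OF xs(1)]] prob_space.finite_measure[OF K_prob[OF xs(2)]]
    by (simp add: finite_measure.emeasure_eq_measure)
  finally show "emeasure (K (x, s)) (A \<times> B) = emeasure (distr (K (x, 0)) M (trn s)) (A \<times> B)" ..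
qed

lemma K_translate:
  assumes y: "y \<in> space M"
  shows "K (trn t y) = distr (K y) M (trn t)"
proof -
  obtain x s where y': "y = (x, s)" by (cases y)
  with y have x: "x \<in> space Xs" by (auto simp: space_M)
  have x0: "(x, 0) \<in> space M" using x by (simp add: space_M)
  have "K (trn t y) = K (x, s + t)" unfolding y' trn_def by simp
  also have "\<dots> = distr (K (x, 0)) M (trn (s + t))" by (rule K_translate_origin[OF x])
  also have "trn (s + t) = trn t \<circ> trn s" by (auto simp: fun_eq_iff trn_def add.assoc)
  also have "distr (K (x, 0)) M (trn t \<circ> trn s) = distr (distr (K (x, 0)) M (trn s)) M (trn t)"
    by (rule distr_distr[symmetric]) (simp_all add: measurable_cong_sets[OF K_sets[OF x0] refl])
  also have "distr (K (x, 0)) M (trn s) = K y" unfolding y' by (rule K_translate_origin[OF x, symmetric])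
  finally show ?thesis .
qed

lemma transl_rect_transitions:
  assumes sQ: "sets Q = sets PS" and RQ: "rect_transitions Q"
  shows "rect_transitions (distr Q PS (transl t))"
  unfolding rect_transitions_def
proof safe
  fix n and A :: "nat \<Rightarrow> _" and B assume "\<forall>i. A i \<in> sets M" and B[measurable]: "B \<in> sets M"
  then have Ai[measurable]: "A i \<in> sets M" for i by auto
  note mQ = measurable_cong_sets[OF sQ refl]
  have spQ: "space Q = space PS" using sets_eq_imp_space_eq[OF sQ] .
  define A' where "A' i = trn t -` A i \<inter> space M" for i
  define B' where "B' = trn t -` B \<inter> space M"
  have A'[measurable]: "A' i \<in> sets M" for i unfolding A'_def by (rule measurable_sets[OF trn_meas Ai])
  have B'[measurable]: "B' \<in> sets M" unfolding B'_def by (rule measurable_sets[OF trn_meas B])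
  have sp: "\<omega> \<in> space PS \<Longrightarrow> \<omega> i \<in> space M" for \<omega> i by (auto simp: space_PiM)
  have trsp: "\<omega> \<in> space PS \<Longrightarrow> transl t \<omega> \<in> space PS" for \<omega>
    using measurable_space[OF transl_meas] by blast
  have Kn: "emeasure (K (transl t \<omega> n)) B = emeasure (K (\<omega> n)) B'" if \<omega>: "\<omega> \<in> space PS" for \<omega>
    unfolding transl_def K_translate[OF sp[OF \<omega>]] B'_def
    by (subst emeasure_distr) (simp_all add: measurable_cong_sets[OF K_sets[OF sp[OF \<omega>]] refl]
        sets_eq_imp_space_eq[OF K_sets[OF sp[OF \<omega>]]])
  have "emeasure (distr Q PS (transl t)) {\<omega>\<in>space PS. (\<forall>i\<le>n. \<omega> i \<in> A i) \<and> \<omega> (Suc n) \<in> B}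
     = emeasure Q (transl t -` {\<omega>\<in>space PS. (\<forall>i\<le>n. \<omega> i \<in> A i) \<and> \<omega> (Suc n) \<in> B} \<inter> space Q)"
    by (rule emeasure_distr) (simp_all add: mQ)
  also have "transl t -` {\<omega>\<in>space PS. (\<forall>i\<le>n. \<omega> i \<in> A i) \<and> \<omega> (Suc n) \<in> B} \<inter> space Q
     = {\<omega>\<in>space PS. (\<forall>i\<le>n. \<omega> i \<in> A' i) \<and> \<omega> (Suc n) \<in> B'}"
    unfolding spQ A'_def B'_def using trsp sp by (auto simp: transl_def)
  also have "emeasure Q \<dots> = (\<integral>\<^sup>+\<omega>. indicator {\<omega>\<in>space PS. \<forall>i\<le>n. \<omega> i \<in> A' i} \<omega> * emeasure (K (\<omega> n)) B' \<partial>Q)"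
    using RQ A' B' unfolding rect_transitions_def by blast
  also have "\<dots> = (\<integral>\<^sup>+\<omega>. indicator {\<omega>\<in>space PS. \<forall>i\<le>n. \<omega> i \<in> A i} (transl t \<omega>) * emeasure (K (transl t \<omega> n)) B \<partial>Q)"
  proof (rule nn_integral_cong)
    fix \<omega> assume "\<omega> \<in> space Q"
    then have \<omega>: "\<omega> \<in> space PS" by (simp add: spQ)
    show "indicator {\<omega>\<in>space PS. \<forall>i\<le>n. \<omega> i \<in> A' i} \<omega> * emeasure (K (\<omega> n)) B' =
          indicator {\<omega>\<in>space PS. \<forall>i\<le>n. \<omega> i \<in> A i} (transl t \<omega>) * emeasure (K (transl t \<omega> n)) B"
      unfolding Kn[OF \<omega>] using \<omega> trsp[OF \<omega>] sp[OF \<omega>] by (auto simp: indicator_def A'_def transl_def)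
  qed
  also have "\<dots> = (\<integral>\<^sup>+\<omega>. indicator {\<omega>\<in>space PS. \<forall>i\<le>n. \<omega> i \<in> A i} \<omega> * emeasure (K (\<omega> n)) B \<partial>distr Q PS (transl t))"
    by (rule nn_integral_distr[symmetric]) (simp_all add: mQ)
  finally show "emeasure (distr Q PS (transl t)) {\<omega>\<in>space PS. (\<forall>i\<le>n. \<omega> i \<in> A i) \<and> \<omega> (Suc n) \<in> B} =
    (\<integral>\<^sup>+\<omega>. indicator {\<omega>\<in>space PS. \<forall>i\<le>n. \<omega> i \<in> A i} \<omega> * emeasure (K (\<omega> n)) B \<partial>distr Q PS (transl t))" .
qed

lemma chain_from_transl:
  assumes y: "y \<in> space M"
  shows "chain_from (trn t y) = distr (chain_from y) PS (transl t)"
proof -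
  note sQ = chain_from_sets[OF y]
  note mQ = measurable_cong_sets[OF sQ refl]
  define Q' where "Q' = distr (chain_from y) PS (transl t)"
  have fQ': "finite_measure Q'" unfolding Q'_def
    by (rule finite_measure.finite_measure_distr[OF prob_space.finite_measure[OF chain_from_prob[OF y]]]) (simp add: mQ)
  have init: "distr Q' M (\<lambda>\<omega>. \<omega> 0) = return M (trn t y)"
  proof -
    have "distr Q' M (\<lambda>\<omega>. \<omega> 0) = distr (chain_from y) M ((\<lambda>\<omega>. \<omega> 0) \<circ> transl t)"
      unfolding Q'_def by (rule distr_distr) (simp_all add: mQ)
    also have "(\<lambda>\<omega>. \<omega> 0) \<circ> transl t = trn t \<circ> (\<lambda>\<omega>. \<omega> 0)" by (simp add: fun_eq_iff transl_def)
    also have "distr (chain_from y) M (trn t \<circ> (\<lambda>\<omega>. \<omega> 0)) = distr (distr (chain_from y) M (\<lambda>\<omega>. \<omega> 0)) M (trn t)"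
      by (rule distr_distr[symmetric]) (simp_all add: mQ)
    also have "\<dots> = return M (trn t y)" unfolding chain_from_init[OF y] by (rule distr_return[OF trn_meas y])
    finally show ?thesis .
  qed
  have RQ': "rect_transitions Q'" unfolding Q'_def
    by (rule transl_rect_transitions[OF sQ cyl_transitions_rect[OF chain_from_cyl_transitions[OF y]]])
  have "Q' = return M (trn t y) \<bind> chain_from"
    by (rule chain_eq_bind[OF _ prob_space.finite_measure[OF prob_space_return[OF trn_space[OF y]]] fQ' _ RQ' init])
       (simp_all add: Q'_def)
  also have "\<dots> = chain_from (trn t y)"
    by (rule bind_return[OF chain_from_sub trn_space[OF y]])
  finally show ?thesis unfolding Q'_def ..
qed

end

context chain_kernel
begin

definition visits_io :: "real \<Rightarrow> real^2 \<Rightarrow> (nat \<Rightarrow> 'x \<times> (real^2)) set" where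
  "visits_io \<epsilon> t = {\<omega>\<in>space PS. \<exists>\<^sub>\<infinity>n. norm (snd (\<omega> n) - t) < \<epsilon>}"

lemma near_sets[measurable]: "{\<omega>\<in>space PS. norm (snd (\<omega> n) - t) < \<epsilon>} \<in> sets PS"
  unfolding state_space_def by measurable

lemma visits_io_limsup: "visits_io \<epsilon> t = (\<Inter>m. \<Union>i\<in>{m..}. {\<omega>\<in>space PS. norm (snd (\<omega> i) - t) < \<epsilon>})"
  unfolding visits_io_def INFM_nat_le by auto

lemma visits_io_sets[measurable]: "visits_io \<epsilon> t \<in> sets PS"
  unfolding visits_io_limsup by measurable

lemma visits_io_shift: "\<omega> \<in> space PS \<Longrightarrow> pshift n \<omega> \<in> visits_io \<epsilon> t \<longleftrightarrow> \<omega> \<in> visits_io \<epsilon> t"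
proof -
  assume \<omega>: "\<omega> \<in> space PS"
  then have sp: "pshift n \<omega> \<in> space PS" using measurable_space[OF pshift_meas] by blast
  have "(\<exists>\<^sub>\<infinity>i. norm (snd (\<omega> (n + i)) - t) < \<epsilon>) \<longleftrightarrow> (\<exists>\<^sub>\<infinity>i. norm (snd (\<omega> i) - t) < \<epsilon>)"
    by (rule INFM_shift)
  then show ?thesis using \<omega> sp unfolding visits_io_def pshift_def by auto
qed

lemma visits_io_lower_bound:
  assumes pQ: "prob_space Q" and sQ: "sets Q = sets PS" and d: "0 < d"
    and diverge: "(\<Sum>n. emeasure Q {\<omega>\<in>space PS. norm (snd (\<omega> (Suc n)) - t) < \<epsilon>}) = \<infinity>"
    and ratio: "liminf (\<lambda>N. ereal ((\<Sum>n\<in>{1..N}. \<Sum>m\<in>{1..N}. measure Q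
                   {\<omega>\<in>space PS. norm (snd (\<omega> n) - t) < \<epsilon> \<and> norm (snd (\<omega> (n + m)) - t) < \<epsilon>})
                / (\<Sum>n\<in>{1..N}. measure Q {\<omega>\<in>space PS. norm (snd (\<omega> n) - t) < \<epsilon>})^2)) \<le> ereal d"
  shows "1 / (8 + 16 * d) \<le> measure Q (visits_io \<epsilon> t)"
proof -
  interpret Q: prob_space Q by fact
  define A where "A n = {\<omega>\<in>space PS. norm (snd (\<omega> n) - t) < \<epsilon>}" for n
  have A: "A n \<in> Q.events" for n unfolding A_def sQ by measurable
  have "A n \<inter> A (n + m) = {\<omega>\<in>space PS. norm (snd (\<omega> n) - t) < \<epsilon> \<and> norm (snd (\<omega> (n + m)) - t) < \<epsilon>}" for n m
    unfolding A_def by auto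
  then have ratio_A: "liminf (\<lambda>N. ereal ((\<Sum>n\<in>{1..N}. \<Sum>m\<in>{1..N}. Q.prob (A n \<inter> A (n + m)))
      / (\<Sum>n\<in>{1..N}. Q.prob (A n))^2)) \<le> ereal d"
    using ratio unfolding A_def by simp
  have "\<exists>N. B \<le> (\<Sum>n\<in>{1..N}. Q.prob (A n))" for B
    using diverge unfolding A_def by (intro Q.partial_sums_unbounded) (use A A_def in auto)
  from Q.kochen_stone[OF A d this ratio_A]
  show ?thesis unfolding visits_io_limsup A_def .
qed

lemma generator_cylinder:
  assumes B: "B \<in> projective_family.generator UNIV (\<lambda>_::nat. M)"
  shows "\<exists>n X. X \<in> sets (Pi\<^sub>M {0..<Suc n} (\<lambda>_. M)) \<and> B = {\<omega>\<in>space PS. restrict \<omega> {0..<Suc n} \<in> X}"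
proof -
  obtain y0 where y0: "y0 \<in> space M" using space_M_nonempty by auto
  interpret IT: Ionescu_Tulcea "it_kernels y0" "\<lambda>_. M" by (rule IT_chain[OF y0])
  from B obtain J X where J: "finite J" and X: "X \<in> sets (Pi\<^sub>M J (\<lambda>_. M))" and BJ: "B = prod_emb UNIV (\<lambda>_. M) J X"
    by (auto elim!: IT.PF.generator.cases)
  obtain k where "J \<subseteq> {..<k}" using finite_nat_bounded[OF J] by auto
  then have n: "J \<subseteq> {0..<Suc k}" by auto
  define X' where "X' = prod_emb {0..<Suc k} (\<lambda>_. M) J X"
  have X': "X' \<in> sets (Pi\<^sub>M {0..<Suc k} (\<lambda>_. M))" unfolding X'_def using n X by simp
  have "B = prod_emb UNIV (\<lambda>_. M) {0..<Suc k} X'" unfolding BJ X'_def using n by simp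
  also have "\<dots> = {\<omega>\<in>space PS. restrict \<omega> {0..<Suc k} \<in> X'}"
    by (auto simp: prod_emb_def space_PiM)
  finally show ?thesis using X' by blast
qed

lemma generator_facts:
  "algebra (space PS) (projective_family.generator UNIV (\<lambda>_::nat. M))"
  "sets PS = sigma_sets (space PS) (projective_family.generator UNIV (\<lambda>_::nat. M))"
proof -
  obtain y0 where y0: "y0 \<in> space M" using space_M_nonempty by auto
  interpret IT: Ionescu_Tulcea "it_kernels y0" "\<lambda>_. M" by (rule IT_chain[OF y0])
  show "algebra (space PS) (projective_family.generator UNIV (\<lambda>_::nat. M))" by (rule IT.PF.algebra_generator)
  show "sets PS = sigma_sets (space PS) (projective_family.generator UNIV (\<lambda>_::nat. M))" by (rule IT.PF.sets_PiM_generator)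
qed

(* A shift-invariant event G whose probability is at most 1 - c from every state of a set
   Good that the chain never leaves occupies at most a fraction 1 - c of every cylinder
   (Markov property at the time of the cylinder). *)
lemma shift_invariant_cylinder_bound:
  assumes sl: "sets lam = sets M" and pl: "prob_space lam"
    and stay: "AE \<omega> in lam \<bind> chain_from. \<forall>n. \<omega> n \<in> Good"
    and escape: "\<And>y. y \<in> space M \<Longrightarrow> y \<in> Good \<Longrightarrow> measure (chain_from y) G \<le> 1 - c"
    and G[measurable]: "G \<in> sets PS" and shift: "\<And>n \<omega>. \<omega> \<in> space PS \<Longrightarrow> pshift n \<omega> \<in> G \<longleftrightarrow> \<omega> \<in> G"
    and c: "c \<le> 1" and X[measurable]: "X \<in> sets (Pi\<^sub>M {0..<Suc n} (\<lambda>_. M))"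
    and C_def: "C = {\<omega>\<in>space PS. restrict \<omega> {0..<Suc n} \<in> X}"
  shows "measure (lam \<bind> chain_from) (C \<inter> G) \<le> (1 - c) * measure (lam \<bind> chain_from) C"
proof -
  define P where "P = lam \<bind> chain_from"
  interpret P: prob_space P unfolding P_def by (rule bind_chain_prob[OF sl pl])
  have sP: "sets P = sets PS" unfolding P_def by (rule bind_chain_sets[OF sl])
  have spP: "space P = space PS" using sets_eq_imp_space_eq[OF sP] .
  have C[measurable]: "C \<in> sets PS" unfolding C_def by measurable
  have CG: "C \<inter> pshift n -` G = C \<inter> G"
    using shift unfolding C_def by auto
  have "emeasure P (C \<inter> G) = (\<integral>\<^sup>+\<omega>. indicator C \<omega> * emeasure (chain_from (\<omega> n)) G \<partial>P)"
    using markov_property[OF P.finite_measure sP _ X G] bind_chain_cyl_transitions[OF sl]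
    unfolding C_def[symmetric] CG P_def by simp
  also have "\<dots> \<le> (\<integral>\<^sup>+\<omega>. indicator C \<omega> * ennreal (1 - c) \<partial>P)"
  proof (rule nn_integral_mono_AE)
    show "AE \<omega> in P. indicator C \<omega> * emeasure (chain_from (\<omega> n)) G \<le> indicator C \<omega> * ennreal (1 - c)"
      using stay unfolding P_def[symmetric]
    proof eventually_elim
      case (elim \<omega>)
      show ?case
      proof (cases "\<omega> \<in> C")
        case True
        then have wn: "\<omega> n \<in> space M" by (auto simp: C_def space_PiM)
        have "emeasure (chain_from (\<omega> n)) G = ennreal (measure (chain_from (\<omega> n)) G)"
          by (rule finite_measure.emeasure_eq_measure[OF prob_space.finite_measure[OF chain_from_prob[OF wn]]])
        also have "\<dots> \<le> ennreal (1 - c)" using escape[OF wn] elim by (intro ennreal_leI) auto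
        finally show ?thesis by (intro mult_left_mono) auto
      qed simp
    qed
  qed
  also have "\<dots> = ennreal (1 - c) * emeasure P C"
    using C sP by (subst nn_integral_multc) (auto simp: mult.commute)
  finally have "ennreal (measure P (C \<inter> G)) \<le> ennreal ((1 - c) * measure P C)"
    using c P.emeasure_eq_measure by (simp add: ennreal_mult'')
  then show ?thesis unfolding P_def using c by (subst (asm) ennreal_le_iff) auto
qed

(* Zero-one law for such events: since cylinders form a generating algebra of the path
   sigma-algebra, G is a null set. *)
lemma shift_invariant_null:
  assumes sl: "sets lam = sets M" and pl: "prob_space lam"
    and stay: "AE \<omega> in lam \<bind> chain_from. \<forall>n. \<omega> n \<in> Good"
    and escape: "\<And>y. y \<in> space M \<Longrightarrow> y \<in> Good \<Longrightarrow> measure (chain_from y) G \<le> 1 - c"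
    and G: "G \<in> sets PS" and shift: "\<And>n \<omega>. \<omega> \<in> space PS \<Longrightarrow> pshift n \<omega> \<in> G \<longleftrightarrow> \<omega> \<in> G"
    and c: "0 < c" "c \<le> 1"
  shows "measure (lam \<bind> chain_from) G = 0"
proof (rule null_if_uniformly_sparse_on_algebra)
  have sP: "sets (lam \<bind> chain_from) = sets PS" by (rule bind_chain_sets[OF sl])
  have spP: "space (lam \<bind> chain_from) = space PS" using sets_eq_imp_space_eq[OF sP] .
  show "finite_measure (lam \<bind> chain_from)"
    by (rule prob_space.finite_measure[OF bind_chain_prob[OF sl pl]])
  show "sets (lam \<bind> chain_from) = sigma_sets (space (lam \<bind> chain_from)) (projective_family.generator UNIV (\<lambda>_. M))"
    "algebra (space (lam \<bind> chain_from)) (projective_family.generator UNIV (\<lambda>_. M))"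
    using generator_facts by (simp_all add: sP spP)
  show "G \<in> sets (lam \<bind> chain_from)" using G sP by simp
  fix B assume "B \<in> projective_family.generator UNIV (\<lambda>_::nat. M)"
  then obtain n X where "X \<in> sets (Pi\<^sub>M {0..<Suc n} (\<lambda>_. M))" "B = {\<omega>\<in>space PS. restrict \<omega> {0..<Suc n} \<in> X}"
    using generator_cylinder by blast
  then show "measure (lam \<bind> chain_from) (B \<inter> G) \<le> (1 - c) * measure (lam \<bind> chain_from) B"
    by (intro shift_invariant_cylinder_bound[OF sl pl stay escape G shift c(2)])
qed (use c in auto)

end

context markov_random_walk
begin

lemma visits_io_transl: "transl t -` visits_io \<epsilon> s \<inter> space PS = visits_io \<epsilon> (s - t)"
proof -
  have "\<omega> \<in> space PS \<Longrightarrow> transl t \<omega> \<in> space PS" for \<omega>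
    using measurable_space[OF transl_meas] by blast
  moreover have "norm (snd y + t - s) = norm (snd y - (s - t))" for y :: "'x \<times> (real^2)"
    by (simp add: algebra_simps)
  ultimately show ?thesis unfolding visits_io_def by (auto simp: transl_def trn_def)
qed

(* By spatial homogeneity, a uniform lower bound c on the recurrence probabilities from
   the states (x, 0) to all points of a difference-closed set SS bounds the escape
   probability from every state whose R^2-component lies in SS. *)
lemma escape_bound:
  assumes SS_diff: "\<And>a b. a \<in> SS \<Longrightarrow> b \<in> SS \<Longrightarrow> a - b \<in> SS"
    and low: "\<And>x t. x \<in> space Xs \<Longrightarrow> t \<in> SS \<Longrightarrow> c \<le> measure (chain_from (x, 0)) (visits_io \<epsilon> t)"
    and s: "s \<in> SS" and y: "y \<in> space M" and ySS: "snd y \<in> SS"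
  shows "measure (chain_from y) (space PS - visits_io \<epsilon> s) \<le> 1 - c"
proof -
  obtain x t where yx: "y = (x, t)" by (cases y)
  have x: "x \<in> space Xs" using y yx by (simp add: space_M)
  have x0: "(x, 0) \<in> space M" using x by (simp add: space_M)
  have "chain_from y = distr (chain_from (x, 0)) PS (transl t)"
    using chain_from_transl[OF x0, of t] unfolding yx trn_def by simp
  then have "measure (chain_from y) (visits_io \<epsilon> s) = measure (chain_from (x, 0)) (transl t -` visits_io \<epsilon> s \<inter> space PS)"
    by (simp add: measure_distr measurable_cong_sets[OF chain_from_sets[OF x0] refl] chain_from_space[OF x0])
  also have "\<dots> = measure (chain_from (x, 0)) (visits_io \<epsilon> (s - t))" by (simp add: visits_io_transl)
  finally have "c \<le> measure (chain_from y) (visits_io \<epsilon> s)"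
    using low[OF x SS_diff[OF s]] ySS yx by simp
  moreover have "measure (chain_from y) (space PS - visits_io \<epsilon> s) = 1 - measure (chain_from y) (visits_io \<epsilon> s)"
    using prob_space.prob_compl[OF chain_from_prob[OF y], of "visits_io \<epsilon> s"] chain_from_sets[OF y] chain_from_space[OF y]
    by simp
  ultimately show ?thesis by simp
qed

lemma recurrence_from_uniform_bound:
  assumes sl: "sets lam = sets M" and pl: "prob_space lam"
    and stay: "AE \<omega> in lam \<bind> chain_from. \<forall>n. snd (\<omega> n) \<in> SS"
    and SS_diff: "\<And>a b. a \<in> SS \<Longrightarrow> b \<in> SS \<Longrightarrow> a - b \<in> SS"
    and low: "\<And>x t. x \<in> space Xs \<Longrightarrow> t \<in> SS \<Longrightarrow> c \<le> measure (chain_from (x, 0)) (visits_io \<epsilon> t)"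
    and c: "0 < c" "c \<le> 1" and s: "s \<in> SS"
  shows "measure (lam \<bind> chain_from) (visits_io \<epsilon> s) = 1"
proof -
  interpret P: prob_space "lam \<bind> chain_from" by (rule bind_chain_prob[OF sl pl])
  have sP: "sets (lam \<bind> chain_from) = sets PS" by (rule bind_chain_sets[OF sl])
  have "measure (lam \<bind> chain_from) (space PS - visits_io \<epsilon> s) = 0"
  proof (rule shift_invariant_null[OF sl pl, where Good="{y. snd y \<in> SS}"])
    show "AE \<omega> in lam \<bind> chain_from. \<forall>n. \<omega> n \<in> {y. snd y \<in> SS}" using stay by simp
    show "\<And>n \<omega>. \<omega> \<in> space PS \<Longrightarrow> pshift n \<omega> \<in> space PS - visits_io \<epsilon> s \<longleftrightarrow> \<omega> \<in> space PS - visits_io \<epsilon> s"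
      using visits_io_shift measurable_space[OF pshift_meas] by blast
  qed (use escape_bound[OF SS_diff low s] c in auto)
  then show ?thesis
    using P.prob_compl[of "visits_io \<epsilon> s"] sP sets_eq_imp_space_eq[OF sP] by simp
qed

lemma P0_recurrence_lower_bound:
  assumes x: "x \<in> space Xs" and d: "0 < d"
    and diverge: "(\<Sum>n. emeasure (P0 Xs K (return Xs x))
        {\<omega>\<in>space (P0 Xs K (return Xs x)). norm (S (Suc n) \<omega> - t) < \<epsilon>}) = \<infinity>"
    and ratio: "liminf (\<lambda>N. ereal
          ((\<Sum>n\<in>{1..N}. \<Sum>m\<in>{1..N}. measure (P0 Xs K (return Xs x))
              {\<omega>\<in>space (P0 Xs K (return Xs x)). norm (S n \<omega> - t) < \<epsilon> \<and> norm (S (n + m) \<omega> - t) < \<epsilon>})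
           / (\<Sum>n\<in>{1..N}. measure (P0 Xs K (return Xs x))
              {\<omega>\<in>space (P0 Xs K (return Xs x)). norm (S n \<omega> - t) < \<epsilon>}) ^ 2)) \<le> ereal d"
  shows "1 / (8 + 16 * d) \<le> measure (chain_from (x, 0)) (visits_io \<epsilon> t)"
proof -
  have x0: "(x, 0) \<in> space M" using x by (simp add: space_M)
  note P0x = P0_point[OF x] chain_from_space[OF x0]
  show ?thesis
    using diverge ratio unfolding P0x S_def
    by (intro visits_io_lower_bound[OF chain_from_prob[OF x0] chain_from_sets[OF x0] d])
qed

lemma bind_chain_stays_in:
  assumes pm: "prob_space \<mu>" and sm: "sets \<mu> = sets Xs" and SS: "closed SS"
    and supp: "\<And>x n. x \<in> space Xs \<Longrightarrow>
        measure (P0 Xs K (return Xs x)) {\<omega>\<in>space (P0 Xs K (return Xs x)). S n \<omega> \<in> SS} = 1"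
  shows "AE \<omega> in distr \<mu> M (\<lambda>x. (x, 0)) \<bind> chain_from. \<forall>n. snd (\<omega> n) \<in> SS"
proof -
  have SSb[measurable]: "SS \<in> sets borel" using SS by (rule borel_closed)
  have mf[measurable]: "(\<lambda>x. (x, 0::real^2)) \<in> \<mu> \<rightarrow>\<^sub>M M"
    unfolding state_space_def measurable_cong_sets[OF sm refl] by measurable
  have kernel: "(\<lambda>x. chain_from (x, 0)) \<in> \<mu> \<rightarrow>\<^sub>M subprob_algebra PS"
    by (rule measurable_compose[OF mf chain_from_sub])
  have AE_start: "AE \<omega> in chain_from (x, 0). \<forall>n. snd (\<omega> n) \<in> SS" if x: "x \<in> space Xs" for x
    unfolding AE_all_countable
  proof
    fix n
    have x0: "(x, 0) \<in> space M" using x by (simp add: space_M)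
    have "measure (chain_from (x, 0)) {\<omega>\<in>space (chain_from (x, 0)). snd (\<omega> n) \<in> SS} = 1"
      using supp[OF x, of n] unfolding P0_point[OF x] S_def .
    then show "AE \<omega> in chain_from (x, 0). snd (\<omega> n) \<in> SS"
      by (auto dest: prob_space.AE_prob_1[OF chain_from_prob[OF x0]])
  qed
  have "AE x in \<mu>. AE \<omega> in chain_from (x, 0). \<forall>n. snd (\<omega> n) \<in> SS"
  proof (rule AE_I2)
    fix x assume "x \<in> space \<mu>"
    then show "AE \<omega> in chain_from (x, 0). \<forall>n. snd (\<omega> n) \<in> SS"
      using AE_start sets_eq_imp_space_eq[OF sm] by simp
  qed
  moreover have "Measurable.pred PS (\<lambda>\<omega>. \<forall>n. snd (\<omega> n) \<in> SS)"
    unfolding state_space_def by measurable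
  moreover have bind_eq: "distr \<mu> M (\<lambda>x. (x, 0)) \<bind> chain_from = \<mu> \<bind> (\<lambda>x. chain_from (x, 0))"
    using prob_space.not_empty[OF pm] by (rule bind_distr[OF mf chain_from_sub])
  ultimately have "AE \<omega> in \<mu> \<bind> (\<lambda>x. chain_from (x, 0)). \<forall>n. snd (\<omega> n) \<in> SS"
    by (subst AE_bind[OF kernel]) simp_all
  then show ?thesis unfolding bind_eq .
qed

end

locale kochen_stone_walk = markov_random_walk +
  fixes SS :: "(real^2) set" and \<epsilon>S d :: real
  assumes SS_closed: "closed SS" and SS_diff: "\<And>a b. a \<in> SS \<Longrightarrow> b \<in> SS \<Longrightarrow> a - b \<in> SS"
    and SS_support: "\<And>x n. x \<in> space Xs \<Longrightarrow>
        measure (P0 Xs K (return Xs x)) {\<omega>\<in>space (P0 Xs K (return Xs x)). S n \<omega> \<in> SS} = 1"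
    and eS_pos: "\<epsilon>S > 0" and d_pos: "d > 0"
    and H1: "\<And>\<epsilon> x s. 0 < \<epsilon> \<Longrightarrow> \<epsilon> < \<epsilon>S \<Longrightarrow> x \<in> space Xs \<Longrightarrow> s \<in> SS \<Longrightarrow>
        (\<Sum>n. emeasure (P0 Xs K (return Xs x))
            {\<omega>\<in>space (P0 Xs K (return Xs x)). norm (S (Suc n) \<omega> - s) < \<epsilon>}) = \<infinity>"
    and H2: "\<And>\<epsilon> x s. 0 < \<epsilon> \<Longrightarrow> \<epsilon> < \<epsilon>S \<Longrightarrow> x \<in> space Xs \<Longrightarrow> s \<in> SS \<Longrightarrow>
        liminf (\<lambda>N. ereal
          ((\<Sum>n\<in>{1..N}. \<Sum>m\<in>{1..N}. measure (P0 Xs K (return Xs x))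
              {\<omega>\<in>space (P0 Xs K (return Xs x)).
                 norm (S n \<omega> - s) < \<epsilon> \<and> norm (S (n + m) \<omega> - s) < \<epsilon>})
           / (\<Sum>n\<in>{1..N}. measure (P0 Xs K (return Xs x))
              {\<omega>\<in>space (P0 Xs K (return Xs x)). norm (S n \<omega> - s) < \<epsilon>}) ^ 2))
        \<le> ereal d"
begin

(* For every radius eps, every point of SS is visited within eps infinitely often, almost
   surely; radii above eps_S are reduced to a smaller one. *)
lemma P0_visits_io:
  assumes pm: "prob_space \<mu>" and sm: "sets \<mu> = sets Xs" and s: "s \<in> SS" and \<epsilon>: "0 < \<epsilon>"
  shows "measure (P0 Xs K \<mu>) {\<omega>\<in>space (P0 Xs K \<mu>). \<exists>\<^sub>\<infinity>n. norm (S n \<omega> - s) < \<epsilon>} = 1"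
proof -
  define \<epsilon>' where "\<epsilon>' = min \<epsilon> (\<epsilon>S / 2)"
  have \<epsilon>': "0 < \<epsilon>'" "\<epsilon>' < \<epsilon>S" "\<epsilon>' \<le> \<epsilon>" using \<epsilon> eS_pos by (auto simp: \<epsilon>'_def)
  let ?lam = "distr \<mu> M (\<lambda>x. (x, 0))"
  have mf: "(\<lambda>x. (x, 0::real^2)) \<in> \<mu> \<rightarrow>\<^sub>M M"
    unfolding state_space_def measurable_cong_sets[OF sm refl] by measurable
  have sl: "sets ?lam = sets M" by simp
  have pl: "prob_space ?lam" by (rule prob_space.prob_space_distr[OF pm mf])
  interpret P: prob_space "?lam \<bind> chain_from" by (rule bind_chain_prob[OF sl pl])
  define c where "c = 1 / (8 + 16 * d)"
  have "1 \<le> 8 + 16 * d" using d_pos by simp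
  then have c: "0 < c" "c \<le> 1" unfolding c_def by simp_all
  have low: "c \<le> measure (chain_from (x, 0)) (visits_io \<epsilon>' t)" if x: "x \<in> space Xs" and t: "t \<in> SS" for x t
    unfolding c_def by (rule P0_recurrence_lower_bound[OF x d_pos H1[OF \<epsilon>'(1,2) x t] H2[OF \<epsilon>'(1,2) x t]])
  have "measure (?lam \<bind> chain_from) (visits_io \<epsilon>' s) = 1"
    by (rule recurrence_from_uniform_bound[OF sl pl bind_chain_stays_in[OF pm sm SS_closed SS_support] SS_diff low c s])
  moreover have "visits_io \<epsilon>' s \<subseteq> visits_io \<epsilon> s"
  proof
    fix \<omega> assume "\<omega> \<in> visits_io \<epsilon>' s"
    then have "\<omega> \<in> space PS" "\<exists>\<^sub>\<infinity>n. norm (snd (\<omega> n) - s) < \<epsilon>'" by (simp_all add: visits_io_def)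
    moreover from this(2) have "\<exists>\<^sub>\<infinity>n. norm (snd (\<omega> n) - s) < \<epsilon>"
      by (rule INFM_mono) (use \<epsilon>'(3) in simp)
    ultimately show "\<omega> \<in> visits_io \<epsilon> s" by (simp add: visits_io_def)
  qed
  moreover have "visits_io \<epsilon> s \<in> P.events" using bind_chain_sets[OF sl] by simp
  ultimately have "1 \<le> measure (?lam \<bind> chain_from) (visits_io \<epsilon> s)"
    using P.finite_measure_mono[of "visits_io \<epsilon>' s" "visits_io \<epsilon> s"] by simp
  moreover have "measure (?lam \<bind> chain_from) (visits_io \<epsilon> s) \<le> 1"
    by (rule P.prob_le_1)
  moreover have visits_eq: "{\<omega>\<in>space (?lam \<bind> chain_from). \<exists>\<^sub>\<infinity>n. norm (S n \<omega> - s) < \<epsilon>} = visits_io \<epsilon> s"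
    unfolding visits_io_def S_def sets_eq_imp_space_eq[OF bind_chain_sets[OF sl]] ..
  ultimately show ?thesis unfolding P0_eq_bind[OF pm sm] visits_eq by linarith
qed

theorem recurrence_set_eq:
  assumes "prob_space \<mu>" "sets \<mu> = sets Xs"
  shows "recurrence_set Xs K SS \<mu> = SS"
  using P0_visits_io[OF assms] unfolding recurrence_set_def by auto

end

theorem mainTheorem2:
  fixes Xs :: "'x measure"
    and K :: "'x \<times> (real^2) \<Rightarrow> ('x \<times> (real^2)) measure"
    and \<pi> :: "'x measure"
    and SS :: "(real^2) set"
    and \<epsilon>S d :: real
  assumes K_kernel: "K \<in> state_space Xs \<rightarrow>\<^sub>M prob_algebra (state_space Xs)"
    and MRW: "\<And>x s A B. x \<in> space Xs \<Longrightarrow> A \<in> sets Xs \<Longrightarrow> B \<in> sets (borel :: (real^2) measure) \<Longrightarrow>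
        measure (K (x, s)) (A \<times> B) = measure (K (x, 0)) (A \<times> ((\<lambda>t. t - s) ` B))"
    and pi_prob: "prob_space \<pi>" and pi_sets: "sets \<pi> = sets Xs"
    and pi_inv: "\<And>A. A \<in> sets Xs \<Longrightarrow>
        (\<integral>x. measure (K (x, 0)) (A \<times> UNIV) \<partial>\<pi>) = measure \<pi> A"
    and S1_int: "integrable (P0 Xs K \<pi>) (S 1)"
    and S1_mean: "(\<integral>\<omega>. S 1 \<omega> \<partial>(P0 Xs K \<pi>)) = 0"
    and SS_closed: "closed SS" and SS_zero: "0 \<in> SS"
    and SS_diff: "\<And>a b. a \<in> SS \<Longrightarrow> b \<in> SS \<Longrightarrow> a - b \<in> SS"
    and SS_dim: "dim SS = 2"
    and SS_support: "\<And>x n. x \<in> space Xs \<Longrightarrow>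
        measure (P0 Xs K (return Xs x)) {\<omega>\<in>space (P0 Xs K (return Xs x)). S n \<omega> \<in> SS} = 1"
    and eS_pos: "\<epsilon>S > 0" and d_pos: "d > 0"
    and H1: "\<And>\<epsilon> x s. 0 < \<epsilon> \<Longrightarrow> \<epsilon> < \<epsilon>S \<Longrightarrow> x \<in> space Xs \<Longrightarrow> s \<in> SS \<Longrightarrow>
        (\<Sum>n. emeasure (P0 Xs K (return Xs x))
            {\<omega>\<in>space (P0 Xs K (return Xs x)). norm (S (Suc n) \<omega> - s) < \<epsilon>}) = \<infinity>"
    and H2: "\<And>\<epsilon> x s. 0 < \<epsilon> \<Longrightarrow> \<epsilon> < \<epsilon>S \<Longrightarrow> x \<in> space Xs \<Longrightarrow> s \<in> SS \<Longrightarrow>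
        liminf (\<lambda>N. ereal
          ((\<Sum>n\<in>{1..N}. \<Sum>m\<in>{1..N}. measure (P0 Xs K (return Xs x))
              {\<omega>\<in>space (P0 Xs K (return Xs x)).
                 norm (S n \<omega> - s) < \<epsilon> \<and> norm (S (n + m) \<omega> - s) < \<epsilon>})
           / (\<Sum>n\<in>{1..N}. measure (P0 Xs K (return Xs x))
              {\<omega>\<in>space (P0 Xs K (return Xs x)). norm (S n \<omega> - s) < \<epsilon>}) ^ 2))
        \<le> ereal d"
  shows "\<And>\<mu>. prob_space \<mu> \<Longrightarrow> sets \<mu> = sets Xs \<Longrightarrow> recurrence_set Xs K SS \<mu> = SS"
proof -
  have "space Xs \<noteq> {}"
    using prob_space.not_empty[OF pi_prob] sets_eq_imp_space_eq[OF pi_sets] by simp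
  then interpret kochen_stone_walk Xs K SS \<epsilon>S d
    using K_kernel MRW SS_closed SS_diff SS_support eS_pos d_pos H1 H2 by unfold_locales
  show "\<And>\<mu>. prob_space \<mu> \<Longrightarrow> sets \<mu> = sets Xs \<Longrightarrow> recurrence_set Xs K SS \<mu> = SS"
    by (rule recurrence_set_eq)
qed

end
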